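(* Let $\mathcal{C}=\mathcal{C}_{\mathcal{Q}}$ be a harmonic curve in $\mathbb{P}^2$. Then there is a polarity $P\mapsto p$ of $\mathbb{P}^2$ such that: (i) for every point $P$, $P\in\mathcal{C}$ if and only if $P\in p$; (ii) for every point $P\notin\mathcal{C}$ (so that $P\notin p$), the harmonic reflection $\rho_{P,p}$ maps $\mathcal{C}$ onto itself. Moreover, for each point $Z\in\mathcal{C}$ its polar line $z$ is the line of the tangent bundle $\mathcal{C}_{\mathcal{Q}}^*$ through $Z$.
   Context: $\mathbb{P}^2$ denotes the projective plane over a field $F$ with $\operatorname{char}F\neq 2$. For distinct points $X,Y$, $X\vee Y$ is the line through them; for distinct lines $\ell,m$, $\ell\wedge m$ is their common point. Maps act on the right. Four distinct collinear points $A,C,B,D$ form a harmonic set with conjugate pairs $\{A,B\}$ and $\{C,D\}$ if the cross-ratio $(A,B;C,D)=-1$. Four distinct concurrent lines form a harmonic pencil with given conjugate pairs if some (equivalently every) line not through their common point meets them in a harmonic set with the corresponding conjugate pairs. For a point $P$ and a line $m$ with $P\notin m$, the harmonic reflection $\rho_{P,m}$ of $\mathbb{P}^2$ fixes $P$ and every point of $m$ and sends every other point $X$ to the harmonic conjugate of $X$ with respect to $P$ and $(X\vee P)\wedge m$. A quadrangle $\mathcal{Q}$ with vertices $A,C,B,D$ (in cyclic order) consists of four points in general position (no three collinear) together with this cyclic order up to reversal; its sides are $A\vee C, C\vee B, B\vee D, D\vee A$, and its diagonal lines are $A\vee B$ and $C\vee D$. The harmonic curve $\mathcal{C}_{\mathcal{Q}}$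 is the set consisting of $A,C,B,D$ together with all points $Z\notin\{A,B,C,D\}$ such that $Z\vee A, Z\vee C, Z\vee B, Z\vee D$ are four distinct lines forming a harmonic pencil with conjugate pairs $\{Z\vee A,Z\vee B\}$ and $\{Z\vee C,Z\vee D\}$. The tangent line at a vertex $V$ is the harmonic conjugate, within the pencil at $V$, of the diagonal line through $V$ with respect to the two sides through $V$; let $a,c,b,d$ be the tangent lines at $A,C,B,D$. For four lines $l_1,\dots,l_4$ (no three concurrent) in cyclic order, their harmonic bundle consists of $l_1,\dots,l_4$ together with every other line $z$ such that $z\wedge l_1,\dots,z\wedge l_4$ are four distinct points forming a harmonic set with conjugate pairs $\{z\wedge l_1,z\wedge l_3\}$, $\{z\wedge l_2,z\wedge l_4\}$; the tangent bundle $\mathcal{C}_{\mathcal{Q}}^*$ is the harmonic bundle of $a,c,b,d$. A polarity of $\mathbb{P}^2$ is a bijection $P\mapsto p$ from points to lines such that $P\in q\iff Q\in p$ for all points $P,Q$ (lower case denotes the image of the same upper case letter); $p$ is the polar of $P$, and $P$ the pole of $p$. *)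

theory Defs
  imports Main
begin

type_synonym 'a v3 = "'a \<times> 'a \<times> 'a"

definition sc :: "'a::field \<Rightarrow> 'a v3 \<Rightarrow> 'a v3" where
  "sc c v = (case v of (x, y, z) \<Rightarrow> (c * x, c * y, c * z))"

definition dot :: "'a::field v3 \<Rightarrow> 'a v3 \<Rightarrow> 'a" where
  "dot u v = (case u of (x1, y1, z1) \<Rightarrow> case v of (x2, y2, z2) \<Rightarrow> x1 * x2 + y1 * y2 + z1 * z2)"

definition cross :: "'a::field v3 \<Rightarrow> 'a v3 \<Rightarrow> 'a v3" where
  "cross u v = (case u of (x1, y1, z1) \<Rightarrow> case v of (x2, y2, z2) \<Rightarrow>
      (y1 * z2 - z1 * y2, z1 * x2 - x1 * z2, x1 * y2 - y1 * x2))"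

definition det3 :: "'a::field v3 \<Rightarrow> 'a v3 \<Rightarrow> 'a v3 \<Rightarrow> 'a" where
  "det3 u v w = dot u (cross v w)"

definition projeq :: "'a::field v3 \<Rightarrow> 'a v3 \<Rightarrow> bool" where
  "projeq u v \<longleftrightarrow> u \<noteq> (0, 0, 0) \<and> v \<noteq> (0, 0, 0) \<and> (\<exists>c. c \<noteq> 0 \<and> u = sc c v)"

lemma sc_sc: "sc c (sc d v) = sc (c * d) v"
  by (cases v) (auto simp: sc_def mult.assoc)

lemma sc_1: "sc 1 v = v"
  by (cases v) (auto simp: sc_def)

lemma part_equivp_projeq: "part_equivp (projeq :: 'a::field v3 \<Rightarrow> _)"
proof (rule part_equivpI)
  show "\<exists>x::'a v3. projeq x x"
    by (rule exI[of _ "(1, 0, 0)"]) (auto simp: projeq_def sc_1 intro: exI[of _ 1])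
  show "symp (projeq :: 'a v3 \<Rightarrow> _)"
  proof (rule sympI)
    fix u v :: "'a v3" assume "projeq u v"
    then obtain c where "c \<noteq> 0" "u = sc c v" "u \<noteq> (0,0,0)" "v \<noteq> (0,0,0)"
      unfolding projeq_def by blast
    then have "v = sc (inverse c) u" by (simp add: sc_sc sc_1)
    then show "projeq v u" using \<open>c \<noteq> 0\<close> \<open>u \<noteq> _\<close> \<open>v \<noteq> _\<close> unfolding projeq_def by (auto intro!: exI[of _ "inverse c"])
  qed
  show "transp (projeq :: 'a v3 \<Rightarrow> _)"
  proof (rule transpI)
    fix u v w :: "'a v3" assume "projeq u v" "projeq v w"
    then show "projeq u w" unfolding projeq_def
      by (auto simp: sc_sc) (metis mult_eq_0_iff)
  qed
qed

quotient_type (overloaded) 'a point = "'a::field v3" / partial: projeq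
  by (rule part_equivp_projeq)

text \<open>Lines are given by (dual) homogeneous coordinates.\<close>
quotient_type (overloaded) 'a line = "'a::field v3" / partial: projeq
  by (rule part_equivp_projeq)

lemma dot_sc: "dot (sc c u) (sc d v) = c * d * dot u v"
  by (cases u; cases v) (simp add: dot_def sc_def algebra_simps)

lift_definition inc :: "'a::field point \<Rightarrow> 'a line \<Rightarrow> bool" is "\<lambda>u v. dot u v = 0"
  unfolding projeq_def by (auto simp: dot_sc)

definition join :: "'a::field point \<Rightarrow> 'a point \<Rightarrow> 'a line" where
  "join P Q = (THE l. inc P l \<and> inc Q l)"

definition meet :: "'a::field line \<Rightarrow> 'a line \<Rightarrow> 'a point" where
  "meet l m = (THE P. inc P l \<and> inc P m)"

definition collinear :: "'a::field point set \<Rightarrow> bool" where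
  "collinear S \<longleftrightarrow> (\<exists>l. \<forall>P\<in>S. inc P l)"

definition concurrent :: "'a::field line set \<Rightarrow> bool" where
  "concurrent S \<longleftrightarrow> (\<exists>P. \<forall>l\<in>S. inc P l)"

text \<open>For
  \<open>c = a + \<lambda> b\<close>, \<open>d = a + \<mu> b\<close> this equals \<open>\<lambda>/\<mu>\<close>.\<close>
definition cross_ratio :: "'a::field point \<Rightarrow> 'a point \<Rightarrow> 'a point \<Rightarrow> 'a point \<Rightarrow> 'a" where
  "cross_ratio A B C D =
     (let a = rep_point A; b = rep_point B; c = rep_point C; d = rep_point D;
          e = (SOME e. det3 a b e \<noteq> 0)
      in (det3 a c e * det3 b d e) / (det3 a d e * det3 b c e))"

text \<open>\<open>A, C, B, D\<close> form a harmonic set with conjugate pairs \<open>{A,B}\<close>, \<open>{C,D}\<close>.\<close>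
definition harmonic :: "'a::field point \<Rightarrow> 'a point \<Rightarrow> 'a point \<Rightarrow> 'a point \<Rightarrow> bool" where
  "harmonic A B C D \<longleftrightarrow> distinct [A, B, C, D] \<and> collinear {A, B, C, D}
      \<and> cross_ratio A B C D = -1"

definition harmonic_pencil :: "'a::field line \<Rightarrow> 'a line \<Rightarrow> 'a line \<Rightarrow> 'a line \<Rightarrow> bool" where
  "harmonic_pencil l1 l2 m1 m2 \<longleftrightarrow> distinct [l1, l2, m1, m2] \<and> concurrent {l1, l2, m1, m2}
      \<and> (\<exists>n. \<not> inc (meet l1 l2) n \<and>
             harmonic (meet n l1) (meet n l2) (meet n m1) (meet n m2))"

definition harm_conj :: "'a::field point \<Rightarrow> 'a point \<Rightarrow> 'a point \<Rightarrow> 'a point" where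
  "harm_conj P M X = (THE Y. harmonic P M X Y)"

definition harmonic_reflection :: "'a::field point \<Rightarrow> 'a line \<Rightarrow> 'a point \<Rightarrow> 'a point" where
  "harmonic_reflection P m X =
     (if X = P \<or> inc X m then X else harm_conj P (meet (join X P) m) X)"

definition general_position :: "'a::field point \<Rightarrow> 'a point \<Rightarrow> 'a point \<Rightarrow> 'a point \<Rightarrow> bool" where
  "general_position A C B D \<longleftrightarrow> distinct [A, C, B, D] \<and>
     \<not> collinear {A, C, B} \<and> \<not> collinear {A, C, D} \<and> \<not> collinear {A, B, D} \<and> \<not> collinear {C, B, D}"

text \<open>Harmonic curve of the quadrangle with vertices \<open>A, C, B, D\<close> (cyclic order).\<close>
definition harmonic_curve :: "'a::field point \<Rightarrow> 'a point \<Rightarrow> 'a point \<Rightarrow> 'a point \<Rightarrow> 'a point set" where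
  "harmonic_curve A C B D = {A, C, B, D} \<union>
     {Z. Z \<notin> {A, B, C, D} \<and>
         harmonic_pencil (join Z A) (join Z B) (join Z C) (join Z D)}"

text \<open>Tangent at vertex \<open>V\<close>: harmonic conjugate of the diagonal \<open>V \<or> W\<close> (W the opposite
  vertex) with respect to the sides \<open>V \<or> S1\<close>, \<open>V \<or> S2\<close>.\<close>
definition tangent_at :: "'a::field point \<Rightarrow> 'a point \<Rightarrow> 'a point \<Rightarrow> 'a point \<Rightarrow> 'a line" where
  "tangent_at V W S1 S2 = (THE t. harmonic_pencil (join V S1) (join V S2) (join V W) t)"

definition harmonic_bundle :: "'a::field line \<Rightarrow> 'a line \<Rightarrow> 'a line \<Rightarrow> 'a line \<Rightarrow> 'a line set" where
  "harmonic_bundle l1 l2 l3 l4 = {l1, l2, l3, l4} \<union>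
     {z. z \<notin> {l1, l2, l3, l4} \<and>
         harmonic (meet z l1) (meet z l3) (meet z l2) (meet z l4)}"

definition tangent_bundle :: "'a::field point \<Rightarrow> 'a point \<Rightarrow> 'a point \<Rightarrow> 'a point \<Rightarrow> 'a line set" where
  "tangent_bundle A C B D = harmonic_bundle
     (tangent_at A B C D) (tangent_at C D B A) (tangent_at B A D C) (tangent_at D C A B)"

definition polarity :: "('a::field point \<Rightarrow> 'a line) \<Rightarrow> bool" where
  "polarity pol \<longleftrightarrow> bij pol \<and> (\<forall>P Q. inc P (pol Q) \<longleftrightarrow> inc Q (pol P))"

end

(*
  In homogeneous coordinates, writing [x y z] for the determinant, the lines joining Z to
  A, B, C, D form a harmonic pencil exactly when
    Q(z) = [z a c][z b d] + [z a d][z b c] = 0,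
  so the harmonic curve is the conic Q = 0 through the four vertices.  Since the characteristic
  is not 2 and the quadrangle is in general position, the polar form B of Q is nondegenerate,
  and P \<mapsto> polar of P is a polarity whose self-conjugate points are the points of the conic.
  For P off the conic, x \<mapsto> B(p,p) x - 2 B(x,p) p induces the harmonic reflection in P and
  its polar and multiplies Q by B(p,p)^2, so it maps the conic onto itself.  The tangent at
  a vertex is its polar, hence the tangent bundle is the harmonic bundle of the polars of the
  vertices; dualising the first computation, it consists exactly of the polars of the points
  of the conic, and the polar of a conic point is the only bundle line through it.
*)

theory Submission
  imports Defs
begin

abbreviation nz :: "'a::field v3 \<Rightarrow> bool" where "nz v \<equiv> v \<noteq> (0, 0, 0)"

definition comb :: "'a::field \<Rightarrow> 'a v3 \<Rightarrow> 'a \<Rightarrow> 'a v3 \<Rightarrow> 'a v3" where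
  "comb s u t v = (case u of (u1, u2, u3) \<Rightarrow> case v of (v1, v2, v3) \<Rightarrow>
     (s * u1 + t * v1, s * u2 + t * v2, s * u3 + t * v3))"

lemmas vec_defs = comb_def sc_def dot_def cross_def det3_def

lemma det3_eq_dot_cross: "det3 u v w = dot (cross u v) w"
  by (cases u rule: prod_cases3; cases v rule: prod_cases3; cases w rule: prod_cases3)
     (simp add: vec_defs algebra_simps)

lemma dot_commute: "dot u v = dot v u"
  by (cases u rule: prod_cases3; cases v rule: prod_cases3) (simp add: vec_defs algebra_simps)

lemma det3_perm:
  "det3 v u w = - det3 u v w" "det3 u w v = - det3 u v w" "det3 w v u = - det3 u v w"
  "det3 v w u = det3 u v w" "det3 w u v = det3 u v w"
  by (cases u rule: prod_cases3; cases v rule: prod_cases3; cases w rule: prod_cases3;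
      simp add: vec_defs algebra_simps)+

lemma det3_same [simp]: "det3 u u w = 0" "det3 u w u = 0" "det3 w u u = 0"
  by (cases u rule: prod_cases3; cases w rule: prod_cases3; simp add: vec_defs algebra_simps)+

lemma dot_cross_same [simp]:
  "dot u (cross u v) = 0" "dot v (cross u v) = 0" "dot (cross u v) u = 0" "dot (cross u v) v = 0"
  by (cases u rule: prod_cases3; cases v rule: prod_cases3; simp add: vec_defs algebra_simps)+

lemma dot_zero [simp]: "dot (0, 0, 0) v = 0" "dot v (0, 0, 0) = 0"
  by (cases v rule: prod_cases3; simp add: dot_def)+

lemma det3_zero [simp]: "det3 (0, 0, 0) v w = 0" "det3 v (0, 0, 0) w = 0" "det3 v w (0, 0, 0) = 0"
  by (cases v rule: prod_cases3; cases w rule: prod_cases3; simp add: vec_defs)+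

lemma cross_antisym: "cross u v = sc (-1) (cross v u)"
  by (cases u rule: prod_cases3; cases v rule: prod_cases3) (simp add: vec_defs algebra_simps)

lemma sc_eq_zero_iff: "sc k v = (0, 0, 0) \<longleftrightarrow> k = 0 \<or> v = (0, 0, 0)"
  by (cases v rule: prod_cases3) (auto simp: vec_defs)

lemma cross_sc_left: "cross (sc k u) v = sc k (cross u v)"
  and cross_sc_right: "cross u (sc k v) = sc k (cross u v)"
  and dot_sc_left: "dot (sc k u) v = k * dot u v"
  and dot_sc_right: "dot u (sc k v) = k * dot u v"
  and det3_sc1: "det3 (sc k u) v w = k * det3 u v w"
  and det3_sc2: "det3 u (sc k v) w = k * det3 u v w"
  and det3_sc3: "det3 u v (sc k w) = k * det3 u v w"
  by (cases u rule: prod_cases3; cases v rule: prod_cases3; cases w rule: prod_cases3;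
      simp add: vec_defs algebra_simps)+

lemmas sc_simps = cross_sc_left cross_sc_right dot_sc_left dot_sc_right
  det3_sc1 det3_sc2 det3_sc3 sc_sc

lemma cross_sc_self: "cross (sc c v) v = (0, 0, 0)"
  by (cases v rule: prod_cases3) (simp add: vec_defs algebra_simps)

lemma cross_eq_zero_imp_sc:
  assumes "cross u v = (0, 0, 0)" "nz v"
  shows "\<exists>c. u = sc c v"
proof -
  obtain u1 u2 u3 where u: "u = (u1, u2, u3)" by (cases u rule: prod_cases3)
  obtain v1 v2 v3 where v: "v = (v1, v2, v3)" by (cases v rule: prod_cases3)
  have e: "u2 * v3 = u3 * v2" "u3 * v1 = u1 * v3" "u1 * v2 = u2 * v1"
    using assms(1) by (simp_all add: u v vec_defs)
  consider "v1 \<noteq> 0" | "v1 = 0" "v2 \<noteq> 0" | "v1 = 0" "v2 = 0" "v3 \<noteq> 0"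
    using assms(2) v by auto
  then show ?thesis
  proof cases
    case 1
    then show ?thesis using e
      by (intro exI[of _ "u1 / v1"]) (simp add: u v vec_defs field_simps; metis mult.commute)
  next
    case 2
    then show ?thesis using e
      by (intro exI[of _ "u2 / v2"]) (simp add: u v vec_defs field_simps; metis mult.commute)
  next
    case 3
    then show ?thesis using e
      by (intro exI[of _ "u3 / v3"]) (simp add: u v vec_defs field_simps)
  qed
qed

lemma cross_eq_zero_iff_projeq:
  assumes "nz u" "nz v"
  shows "cross u v = (0, 0, 0) \<longleftrightarrow> projeq u v"
proof
  assume "cross u v = (0, 0, 0)"
  then obtain c where c: "u = sc c v" using cross_eq_zero_imp_sc assms by blast
  then have "c \<noteq> 0" using assms by (auto simp: sc_eq_zero_iff)
  then show "projeq u v" using c assms by (auto simp: projeq_def)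
next
  assume "projeq u v"
  then obtain c where "u = sc c v" by (auto simp: projeq_def)
  then show "cross u v = (0, 0, 0)" by (simp add: cross_sc_self)
qed

lemma cross_cross_expand: "cross w (cross u v) = comb (dot w v) u (- dot w u) v"
  by (cases u rule: prod_cases3; cases v rule: prod_cases3; cases w rule: prod_cases3)
     (simp add: vec_defs algebra_simps)

lemma cross_cross_common: "cross (cross n l) (cross n m) = sc (det3 n l m) n"
  by (cases n rule: prod_cases3; cases l rule: prod_cases3; cases m rule: prod_cases3)
     (simp add: vec_defs algebra_simps)

lemma orthogonal_both_imp_sc_cross:
  assumes "dot w u = 0" "dot w v = 0" "nz (cross u v)"
  shows "\<exists>c. w = sc c (cross u v)"
proof -
  have "cross w (cross u v) = (0, 0, 0)" using assms
    by (simp add: cross_cross_expand comb_def split: prod.splits)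
  then show ?thesis using cross_eq_zero_imp_sc assms by blast
qed

lemma ex_dot_nonzero:
  assumes "nz w"
  shows "\<exists>e. dot w e \<noteq> 0"
proof -
  obtain w1 w2 w3 where w: "w = (w1, w2, w3)" by (cases w rule: prod_cases3)
  consider "w1 \<noteq> 0" | "w2 \<noteq> 0" | "w3 \<noteq> 0" using assms w by auto
  then show ?thesis
  proof cases
    case 1 then show ?thesis by (intro exI[of _ "(1, 0, 0)"]) (simp add: w dot_def)
  next
    case 2 then show ?thesis by (intro exI[of _ "(0, 1, 0)"]) (simp add: w dot_def)
  next
    case 3 then show ?thesis by (intro exI[of _ "(0, 0, 1)"]) (simp add: w dot_def)
  qed
qed

lemma cramer_rule: "sc (det3 u v e) w =
   (case comb (det3 w v e) u (det3 u w e) v of (x1, x2, x3) \<Rightarrow> case e of (e1, e2, e3) \<Rightarrow>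
      (x1 + det3 u v w * e1, x2 + det3 u v w * e2, x3 + det3 u v w * e3))"
  by (cases u rule: prod_cases3; cases v rule: prod_cases3; cases w rule: prod_cases3;
      cases e rule: prod_cases3) (simp add: vec_defs algebra_simps)

lemma det3_eq_zero_imp_comb:
  assumes "det3 w u v = 0" "nz (cross u v)"
  shows "\<exists>s t. w = comb s u t v"
proof -
  obtain e where "dot (cross u v) e \<noteq> 0" using ex_dot_nonzero assms(2) by blast
  then have d: "det3 u v e \<noteq> 0" by (simp add: det3_eq_dot_cross)
  have "det3 u v w = 0" using assms(1) det3_perm(4) by metis
  then have "sc (det3 u v e) w = comb (det3 w v e) u (det3 u w e) v"
    using cramer_rule[of u v e w] by (simp add: comb_def split: prod.splits)
  then have "w = comb (det3 w v e / det3 u v e) u (det3 u w e / det3 u v e) v"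
    using d by (cases w rule: prod_cases3; cases u rule: prod_cases3; cases v rule: prod_cases3)
               (simp add: vec_defs field_simps)
  then show ?thesis by blast
qed

lemma det3_eq_zero_if_all:
  assumes "det3 u b c = 0" "det3 a u c = 0" "det3 a b u = 0" "det3 a b c \<noteq> 0"
  shows "u = (0, 0, 0)"
proof -
  obtain u1 u2 u3 where u: "u = (u1, u2, u3)" by (cases u rule: prod_cases3)
  obtain a1 a2 a3 where a: "a = (a1, a2, a3)" by (cases a rule: prod_cases3)
  obtain b1 b2 b3 where b: "b = (b1, b2, b3)" by (cases b rule: prod_cases3)
  obtain c1 c2 c3 where c: "c = (c1, c2, c3)" by (cases c rule: prod_cases3)
  have "det3 a b c * u1 = det3 u b c * a1 + det3 a u c * b1 + det3 a b u * c1"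
       "det3 a b c * u2 = det3 u b c * a2 + det3 a u c * b2 + det3 a b u * c2"
       "det3 a b c * u3 = det3 u b c * a3 + det3 a u c * b3 + det3 a b u * c3"
    unfolding u a b c by (simp_all add: vec_defs algebra_simps)
  then show ?thesis using assms u by simp
qed

lemma vec_eq_if_dot_eq:
  assumes "\<And>v. dot v x = dot v (y::'a::field v3)"
  shows "x = y"
proof -
  have "dot (1, 0, 0) x = dot (1, 0, 0) y" "dot (0, 1, 0) x = dot (0, 1, 0) y"
    "dot (0, 0, 1) x = dot (0, 0, 1) y"
    using assms by blast+
  then show ?thesis by (cases x rule: prod_cases3; cases y rule: prod_cases3) (simp add: dot_def)
qed

lemma orthogonal_pair_exists:
  assumes "nz w"
  shows "\<exists>p q. nz p \<and> nz q \<and> nz (cross p q) \<and> dot p w = 0 \<and> dot q w = 0"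
proof -
  obtain w1 w2 w3 where w: "w = (w1, w2, w3)" by (cases w rule: prod_cases3)
  consider "w1 \<noteq> 0" | "w1 = 0" "w2 \<noteq> 0" | "w1 = 0" "w2 = 0" by blast
  then show ?thesis
  proof cases
    case 1
    then show ?thesis
      by (intro exI[of _ "(w2, -w1, 0)"] exI[of _ "(w3, 0, -w1)"]) (simp add: w vec_defs)
  next
    case 2
    then show ?thesis
      by (intro exI[of _ "(1, 0, 0)"] exI[of _ "(0, w3, -w2)"]) (simp add: w vec_defs)
  next
    case 3
    then show ?thesis
      by (intro exI[of _ "(1, 0, 0)"] exI[of _ "(0, 1, 0)"]) (simp add: w vec_defs)
  qed
qed

definition det2 :: "'a::field \<Rightarrow> 'a \<Rightarrow> 'a \<Rightarrow> 'a \<Rightarrow> 'a" where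
  "det2 a b c d = a * d - b * c"

lemma comb_10 [simp]: "comb 1 l 0 m = l" "comb 0 l 1 m = m"
  by (cases l rule: prod_cases3; cases m rule: prod_cases3; simp add: comb_def)+

lemma comb_00 [simp]: "comb 0 x 0 y = (0, 0, 0)"
  by (cases x rule: prod_cases3; cases y rule: prod_cases3; simp add: comb_def)

lemma comb_zero_coeff: "comb 0 a t b = sc t b" "comb s a 0 b = sc s a"
  by (cases a rule: prod_cases3; cases b rule: prod_cases3; simp add: vec_defs)+

lemma comb_sc_same: "comb s (sc k p) t p = sc (s * k + t) p"
  by (cases p rule: prod_cases3) (simp add: vec_defs algebra_simps)

lemma comb_comb_same: "comb s (comb s' x t' p) t p = comb (s * s') x (s * t' + t) p"
  by (cases p rule: prod_cases3; cases x rule: prod_cases3) (simp add: vec_defs algebra_simps)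

lemma det3_comb1: "det3 (comb s x t y) v w = s * det3 x v w + t * det3 y v w"
  by (cases x rule: prod_cases3; cases y rule: prod_cases3; cases v rule: prod_cases3;
      cases w rule: prod_cases3) (simp add: vec_defs algebra_simps)

lemma dot_comb_right: "dot v (comb s x t y) = s * dot v x + t * dot v y"
  by (cases v rule: prod_cases3; cases x rule: prod_cases3; cases y rule: prod_cases3)
     (simp add: vec_defs algebra_simps)

lemma det3_comb_comb: "det3 (comb a1 u b1 v) (comb a2 u b2 v) e = det2 a1 b1 a2 b2 * det3 u v e"
  by (cases u rule: prod_cases3; cases v rule: prod_cases3; cases e rule: prod_cases3)
     (simp add: vec_defs det2_def algebra_simps)

lemma cross_comb_comb: "cross (comb a1 u b1 v) (comb a2 u b2 v) = sc (det2 a1 b1 a2 b2) (cross u v)"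
  by (cases u rule: prod_cases3; cases v rule: prod_cases3) (simp add: vec_defs det2_def algebra_simps)

lemma cross_comb_right: "cross n (comb a l b m) = comb a (cross n l) b (cross n m)"
  by (cases n rule: prod_cases3; cases l rule: prod_cases3; cases m rule: prod_cases3)
     (simp add: vec_defs algebra_simps)

lemma dot_comb_cross: "dot (comb a1 u b1 v) (cross u v) = 0"
  by (cases u rule: prod_cases3; cases v rule: prod_cases3) (simp add: vec_defs algebra_simps)

lemma comb_nonzero:
  assumes "nz (cross u v)" "(a1, b1) \<noteq> (0, 0)"
  shows "nz (comb a1 u b1 v)"
proof
  assume z: "comb a1 u b1 v = (0, 0, 0)"
  have "sc a1 (cross u v) = cross (comb a1 u b1 v) (comb 0 u 1 v)"
       "sc (-b1) (cross u v) = cross (comb a1 u b1 v) (comb 1 u 0 v)"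
    using cross_comb_comb[of a1 u b1 v 0 1] cross_comb_comb[of a1 u b1 v 1 0]
    by (simp_all add: det2_def)
  moreover have "cross (0, 0, 0) w = (0, 0, 0)" for w :: "'a v3"
    by (simp add: vec_defs split: prod.splits)
  ultimately have "sc a1 (cross u v) = (0, 0, 0)" "sc (-b1) (cross u v) = (0, 0, 0)"
    using z by simp_all
  then show False using assms by (auto simp: sc_eq_zero_iff)
qed

text \<open>The coordinates of the lines \<open>P \<or> C\<close>, \<open>P \<or> D\<close> in the pencil spanned by \<open>P \<or> A\<close>, \<open>P \<or> B\<close>.\<close>
lemma cross_in_pencil:
  "comb (- det3 p b c) (cross p a) (det3 p a c) (cross p b) = sc (det3 a b p) (cross p c)"
  by (cases a rule: prod_cases3; cases b rule: prod_cases3; cases c rule: prod_cases3;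
      cases p rule: prod_cases3) (simp add: vec_defs algebra_simps)

lemma det3_pluecker:
  "det3 a b c * det3 z b d - det3 a b d * det3 z b c = det3 a b z * det3 c b d"
  by (cases a rule: prod_cases3; cases b rule: prod_cases3; cases c rule: prod_cases3;
      cases d rule: prod_cases3; cases z rule: prod_cases3) (simp add: vec_defs algebra_simps)

lemma det2_fourth_harmonic_unique:
  assumes "det2 a1 b1 a2 b2 \<noteq> 0" "det2 a1 b1 a3 b3 \<noteq> 0"
    and "det2 a1 b1 a3 b3 * det2 a2 b2 x y + det2 a1 b1 x y * det2 a2 b2 a3 b3 = 0"
    and "det2 a1 b1 a3 b3 * det2 a2 b2 x' y' + det2 a1 b1 x' y' * det2 a2 b2 a3 b3 = 0"
  shows "det2 x y x' y' = 0"
proof -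
  define p where "p = det2 a1 b1 a3 b3 * a2 + det2 a2 b2 a3 b3 * a1"
  define q where "q = det2 a1 b1 a3 b3 * b2 + det2 a2 b2 a3 b3 * b1"
  have e1: "p * y - q * x = 0" using assms(3) unfolding p_def q_def det2_def by (simp add: algebra_simps)
  have e2: "p * y' - q * x' = 0" using assms(4) unfolding p_def q_def det2_def by (simp add: algebra_simps)
  have "a1 * q - b1 * p = det2 a1 b1 a3 b3 * det2 a1 b1 a2 b2" unfolding p_def q_def det2_def
    by (simp add: algebra_simps)
  then have pq: "p \<noteq> 0 \<or> q \<noteq> 0" using assms(1,2) by auto
  show ?thesis
  proof (cases "p = 0")
    case False
    then have "y = q * x / p" "y' = q * x' / p" using e1 e2 by (simp_all add: field_simps)
    then show ?thesis unfolding det2_def by (simp add: field_simps)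
  next
    case True
    then have "x = 0" "x' = 0" using pq e1 e2 by auto
    then show ?thesis unfolding det2_def by simp
  qed
qed

lemma projeq_refl_iff: "projeq v v \<longleftrightarrow> nz v"
  by (auto simp: projeq_def intro!: exI[of _ 1] simp: sc_1)

lemma rep_point_nonzero: "nz (rep_point P)"
  using Quotient3_rep_reflp[OF Quotient3_point, of P] projeq_refl_iff by blast

lemma rep_line_nonzero: "nz (rep_line l)"
  using Quotient3_rep_reflp[OF Quotient3_line, of l] projeq_refl_iff by blast

lemma point_coords_exist: "\<exists>u. nz u \<and> P = abs_point u"
  using rep_point_nonzero Quotient3_abs_rep[OF Quotient3_point] by metis

lemma line_coords_exist: "\<exists>u. nz u \<and> l = abs_line u"
  using rep_line_nonzero Quotient3_abs_rep[OF Quotient3_line] by metis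

lemma abs_point_eq_iff:
  "nz u \<Longrightarrow> nz v \<Longrightarrow> abs_point u = abs_point v \<longleftrightarrow> cross u v = (0, 0, 0)"
  using Quotient3_rel[OF Quotient3_point, of u v] projeq_refl_iff cross_eq_zero_iff_projeq by metis

lemma abs_line_eq_iff:
  "nz u \<Longrightarrow> nz v \<Longrightarrow> abs_line u = abs_line v \<longleftrightarrow> cross u v = (0, 0, 0)"
  using Quotient3_rel[OF Quotient3_line, of u v] projeq_refl_iff cross_eq_zero_iff_projeq by metis

lemma rep_abs_point: "nz u \<Longrightarrow> \<exists>k. k \<noteq> 0 \<and> rep_point (abs_point u) = sc k u"
  using Quotient3_rel[OF Quotient3_point, of "rep_point (abs_point u)" u] projeq_refl_iff
    rep_point_nonzero Quotient3_abs_rep[OF Quotient3_point]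
  by (metis projeq_def)

lemma abs_point_sc: "k \<noteq> 0 \<Longrightarrow> nz u \<Longrightarrow> abs_point (sc k u) = abs_point u"
  by (subst abs_point_eq_iff) (auto simp: sc_eq_zero_iff cross_sc_self)

lemma abs_line_sc: "k \<noteq> 0 \<Longrightarrow> nz u \<Longrightarrow> abs_line (sc k u) = abs_line u"
  by (subst abs_line_eq_iff) (auto simp: sc_eq_zero_iff cross_sc_self)

lemma inc_abs_iff: "nz u \<Longrightarrow> nz w \<Longrightarrow> inc (abs_point u) (abs_line w) \<longleftrightarrow> dot u w = 0"
  using inc.abs_eq projeq_refl_iff by metis

lemma join_abs_eq:
  assumes "nz x" "nz u" "nz v" "nz (cross u v)" "dot x u = 0" "dot x v = 0"
  shows "join (abs_point u) (abs_point v) = abs_line x"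
  unfolding join_def
proof (rule the_equality)
  show "inc (abs_point u) (abs_line x) \<and> inc (abs_point v) (abs_line x)"
    using assms by (simp add: inc_abs_iff dot_commute)
next
  fix l assume l: "inc (abs_point u) l \<and> inc (abs_point v) l"
  obtain w where w: "nz w" "l = abs_line w" using line_coords_exist by blast
  then have "dot w u = 0" "dot w v = 0" using l assms by (auto simp: inc_abs_iff dot_commute)
  then obtain c where c: "w = sc c (cross u v)" using orthogonal_both_imp_sc_cross assms by blast
  obtain c' where c': "x = sc c' (cross u v)"
    using orthogonal_both_imp_sc_cross assms by blast
  have "c \<noteq> 0" "c' \<noteq> 0" using w c c' assms by (auto simp: sc_eq_zero_iff)
  then show "l = abs_line x" using w c c' assms abs_line_sc by metis
qed

lemma meet_abs_eq:
  assumes "nz x" "nz u" "nz v" "nz (cross u v)" "dot x u = 0" "dot x v = 0"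
  shows "meet (abs_line u) (abs_line v) = abs_point x"
  unfolding meet_def
proof (rule the_equality)
  show "inc (abs_point x) (abs_line u) \<and> inc (abs_point x) (abs_line v)"
    using assms by (simp add: inc_abs_iff)
next
  fix P assume P: "inc P (abs_line u) \<and> inc P (abs_line v)"
  obtain w where w: "nz w" "P = abs_point w" using point_coords_exist by blast
  then have "dot w u = 0" "dot w v = 0" using P assms by (auto simp: inc_abs_iff)
  then obtain c where c: "w = sc c (cross u v)" using orthogonal_both_imp_sc_cross assms by blast
  obtain c' where c': "x = sc c' (cross u v)" using orthogonal_both_imp_sc_cross assms by blast
  have "c \<noteq> 0" "c' \<noteq> 0" using w c c' assms by (auto simp: sc_eq_zero_iff)
  then show "P = abs_point x" using w c c' assms abs_point_sc by metis
qed

lemma join_abs_cross: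
  "nz u \<Longrightarrow> nz v \<Longrightarrow> nz (cross u v) \<Longrightarrow> join (abs_point u) (abs_point v) = abs_line (cross u v)"
  by (rule join_abs_eq) simp_all

lemma meet_abs_cross:
  "nz u \<Longrightarrow> nz v \<Longrightarrow> nz (cross u v) \<Longrightarrow> meet (abs_line u) (abs_line v) = abs_point (cross u v)"
  by (rule meet_abs_eq) (simp_all add: dot_commute)

lemma noncollinear_imp_det3_nonzero:
  assumes "nz u" "nz v" "nz w" "abs_point u \<noteq> abs_point v"
    and "\<not> collinear {abs_point u, abs_point v, abs_point w}"
  shows "det3 u v w \<noteq> 0"
proof
  assume d: "det3 u v w = 0"
  have uv: "nz (cross u v)" using assms abs_point_eq_iff by blast
  have "inc (abs_point w) (abs_line (cross u v))"
    using d uv assms by (simp add: inc_abs_iff det3_perm(4)[of u v w] det3_eq_dot_cross dot_commute)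
  moreover have "inc (abs_point u) (abs_line (cross u v))" "inc (abs_point v) (abs_line (cross u v))"
    using uv assms by (simp_all add: inc_abs_iff)
  ultimately show False using assms(5) unfolding collinear_def by auto
qed

lemma cross_ratio_abs:
  assumes "nz a" "nz b" "nz c" "nz d" "nz (cross a b)"
  shows "\<exists>e. det3 a b e \<noteq> 0 \<and> cross_ratio (abs_point a) (abs_point b) (abs_point c) (abs_point d)
            = det3 a c e * det3 b d e / (det3 a d e * det3 b c e)"
proof -
  obtain ka where ka: "ka \<noteq> 0" "rep_point (abs_point a) = sc ka a" using rep_abs_point assms by blast
  obtain kb where kb: "kb \<noteq> 0" "rep_point (abs_point b) = sc kb b" using rep_abs_point assms by blast
  obtain kc where kc: "kc \<noteq> 0" "rep_point (abs_point c) = sc kc c" using rep_abs_point assms by blast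
  obtain kd where kd: "kd \<noteq> 0" "rep_point (abs_point d) = sc kd d" using rep_abs_point assms by blast
  define e where "e = (SOME e. det3 (sc ka a) (sc kb b) e \<noteq> 0)"
  obtain e0 where "dot (cross a b) e0 \<noteq> 0" using ex_dot_nonzero assms by blast
  then have "det3 (sc ka a) (sc kb b) e0 \<noteq> 0" using ka kb by (simp add: sc_simps det3_eq_dot_cross)
  then have e: "det3 (sc ka a) (sc kb b) e \<noteq> 0" unfolding e_def by (rule someI)
  have "cross_ratio (abs_point a) (abs_point b) (abs_point c) (abs_point d)
     = det3 (sc ka a) (sc kc c) e * det3 (sc kb b) (sc kd d) e
       / (det3 (sc ka a) (sc kd d) e * det3 (sc kb b) (sc kc c) e)"
    unfolding cross_ratio_def Let_def ka kb kc kd e_def ..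
  then show ?thesis
    using e ka kb kc kd by (intro exI[of _ e]) (simp add: sc_simps field_simps)
qed

lemma abs_point_comb_eq_iff:
  assumes "nz (cross u v)" "(a1, b1) \<noteq> (0, 0)" "(a2, b2) \<noteq> (0, 0)"
  shows "abs_point (comb a1 u b1 v) = abs_point (comb a2 u b2 v) \<longleftrightarrow> det2 a1 b1 a2 b2 = 0"
  using comb_nonzero[OF assms(1) assms(2)] comb_nonzero[OF assms(1) assms(3)] assms(1)
  by (simp add: abs_point_eq_iff cross_comb_comb sc_eq_zero_iff)

lemma abs_line_comb_eq_iff:
  assumes "nz (cross u v)" "(a1, b1) \<noteq> (0, 0)" "(a2, b2) \<noteq> (0, 0)"
  shows "abs_line (comb a1 u b1 v) = abs_line (comb a2 u b2 v) \<longleftrightarrow> det2 a1 b1 a2 b2 = 0"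
  using comb_nonzero[OF assms(1) assms(2)] comb_nonzero[OF assms(1) assms(3)] assms(1)
  by (simp add: abs_line_eq_iff cross_comb_comb sc_eq_zero_iff)

text \<open>Harmonicity of four elements \<open>a\<^sub>i u + b\<^sub>i v\<close> of a range or pencil, read off
  their coordinates \<open>(a\<^sub>i, b\<^sub>i)\<close>.\<close>
definition harmonic_coords :: "'a::field \<Rightarrow> 'a \<Rightarrow> 'a \<Rightarrow> 'a \<Rightarrow> 'a \<Rightarrow> 'a \<Rightarrow> 'a \<Rightarrow> 'a \<Rightarrow> bool" where
  "harmonic_coords a1 b1 a2 b2 a3 b3 a4 b4 \<longleftrightarrow>
    det2 a1 b1 a2 b2 \<noteq> 0 \<and> det2 a1 b1 a3 b3 \<noteq> 0 \<and> det2 a1 b1 a4 b4 \<noteq> 0 \<and>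
    det2 a2 b2 a3 b3 \<noteq> 0 \<and> det2 a2 b2 a4 b4 \<noteq> 0 \<and> det2 a3 b3 a4 b4 \<noteq> 0 \<and>
    det2 a1 b1 a3 b3 * det2 a2 b2 a4 b4 + det2 a1 b1 a4 b4 * det2 a2 b2 a3 b3 = 0"

lemma harmonic_coords_fourth_unique:
  "harmonic_coords a1 b1 a2 b2 a3 b3 x y \<Longrightarrow> harmonic_coords a1 b1 a2 b2 a3 b3 x' y' \<Longrightarrow>
    det2 x y x' y' = 0"
  unfolding harmonic_coords_def by (rule det2_fourth_harmonic_unique[of a1 b1 a2 b2 a3 b3]) auto

lemma harmonic_comb_iff:
  assumes uv: "nz (cross u v)" and n1: "(a1, b1) \<noteq> (0, 0)" and n2: "(a2, b2) \<noteq> (0, 0)"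
    and n3: "(a3, b3) \<noteq> (0, 0)" and n4: "(a4, b4) \<noteq> (0, 0)"
  shows "harmonic (abs_point (comb a1 u b1 v)) (abs_point (comb a2 u b2 v))
                  (abs_point (comb a3 u b3 v)) (abs_point (comb a4 u b4 v)) \<longleftrightarrow>
    harmonic_coords a1 b1 a2 b2 a3 b3 a4 b4"
proof -
  let ?p = "\<lambda>a b. abs_point (comb a u b v)"
  have dist: "distinct [?p a1 b1, ?p a2 b2, ?p a3 b3, ?p a4 b4] \<longleftrightarrow>
    det2 a1 b1 a2 b2 \<noteq> 0 \<and> det2 a1 b1 a3 b3 \<noteq> 0 \<and> det2 a1 b1 a4 b4 \<noteq> 0 \<and>
    det2 a2 b2 a3 b3 \<noteq> 0 \<and> det2 a2 b2 a4 b4 \<noteq> 0 \<and> det2 a3 b3 a4 b4 \<noteq> 0"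
    using abs_point_comb_eq_iff[OF uv] n1 n2 n3 n4 by simp
  have col: "collinear {?p a1 b1, ?p a2 b2, ?p a3 b3, ?p a4 b4}"
    unfolding collinear_def using uv n1 n2 n3 n4 comb_nonzero[OF uv]
    by (intro exI[of _ "abs_line (cross u v)"]) (auto simp: inc_abs_iff dot_comb_cross)
  show ?thesis
  proof (cases "distinct [?p a1 b1, ?p a2 b2, ?p a3 b3, ?p a4 b4]")
    case False then show ?thesis using dist unfolding harmonic_def harmonic_coords_def by auto
  next
    case True
    have nzab: "nz (cross (comb a1 u b1 v) (comb a2 u b2 v))"
      using True dist uv by (simp add: cross_comb_comb sc_eq_zero_iff)
    obtain e where e: "det3 (comb a1 u b1 v) (comb a2 u b2 v) e \<noteq> 0"
      "cross_ratio (?p a1 b1) (?p a2 b2) (?p a3 b3) (?p a4 b4) =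
       det3 (comb a1 u b1 v) (comb a3 u b3 v) e * det3 (comb a2 u b2 v) (comb a4 u b4 v) e /
       (det3 (comb a1 u b1 v) (comb a4 u b4 v) e * det3 (comb a2 u b2 v) (comb a3 u b3 v) e)"
      using cross_ratio_abs[OF comb_nonzero[OF uv n1] comb_nonzero[OF uv n2]
          comb_nonzero[OF uv n3] comb_nonzero[OF uv n4] nzab] by blast
    have "det3 u v e \<noteq> 0" using e(1) by (simp add: det3_comb_comb)
    then have "cross_ratio (?p a1 b1) (?p a2 b2) (?p a3 b3) (?p a4 b4) =
       det2 a1 b1 a3 b3 * det2 a2 b2 a4 b4 / (det2 a1 b1 a4 b4 * det2 a2 b2 a3 b3)"
      unfolding e(2) det3_comb_comb by (simp add: field_simps)
    moreover have "det2 a1 b1 a4 b4 * det2 a2 b2 a3 b3 \<noteq> 0" using True dist by simp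
    ultimately have "cross_ratio (?p a1 b1) (?p a2 b2) (?p a3 b3) (?p a4 b4) = -1 \<longleftrightarrow>
        det2 a1 b1 a3 b3 * det2 a2 b2 a4 b4 = - (det2 a1 b1 a4 b4 * det2 a2 b2 a3 b3)"
      by (simp add: divide_eq_eq)
    also have "\<dots> \<longleftrightarrow> det2 a1 b1 a3 b3 * det2 a2 b2 a4 b4 + det2 a1 b1 a4 b4 * det2 a2 b2 a3 b3 = 0"
      by (simp add: eq_neg_iff_add_eq_0)
    finally show ?thesis using True dist col unfolding harmonic_def harmonic_coords_def by auto
  qed
qed

lemma harmonic_base_comb_iff:
  assumes "nz (cross u v)" "(a3, b3) \<noteq> (0, 0)" "(a4, b4) \<noteq> (0, 0)"
  shows "harmonic (abs_point u) (abs_point v) (abs_point (comb a3 u b3 v)) (abs_point (comb a4 u b4 v))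
    \<longleftrightarrow> harmonic_coords 1 0 0 1 a3 b3 a4 b4"
  using harmonic_comb_iff[OF assms(1) _ _ assms(2,3), of 1 0 0 1] by simp

lemma harmonic_meet_comb_iff:
  assumes lm: "nz (cross l m)" and n: "dot (cross l m) n \<noteq> 0"
    and n1: "(a1, b1) \<noteq> (0, 0)" and n2: "(a2, b2) \<noteq> (0, 0)"
    and n3: "(a3, b3) \<noteq> (0, 0)" and n4: "(a4, b4) \<noteq> (0, 0)"
  shows "harmonic (meet (abs_line n) (abs_line (comb a1 l b1 m))) (meet (abs_line n) (abs_line (comb a2 l b2 m)))
           (meet (abs_line n) (abs_line (comb a3 l b3 m))) (meet (abs_line n) (abs_line (comb a4 l b4 m)))
    \<longleftrightarrow> harmonic_coords a1 b1 a2 b2 a3 b3 a4 b4"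
proof -
  have nnz: "nz n" using n by (auto simp: dot_def)
  have "det3 n l m \<noteq> 0" using n by (simp add: det3_def dot_commute)
  then have uv: "nz (cross (cross n l) (cross n m))"
    using nnz by (simp add: cross_cross_common sc_eq_zero_iff)
  have mt: "meet (abs_line n) (abs_line (comb a l b m)) = abs_point (comb a (cross n l) b (cross n m))"
    if ab: "(a, b) \<noteq> (0, 0)" for a b
  proof -
    have "nz (cross n (comb a l b m))" unfolding cross_comb_right using comb_nonzero[OF uv ab] .
    then show ?thesis using meet_abs_cross[OF nnz comb_nonzero[OF lm ab]] by (simp add: cross_comb_right)
  qed
  show ?thesis unfolding mt[OF n1] mt[OF n2] mt[OF n3] mt[OF n4]
    by (rule harmonic_comb_iff[OF uv n1 n2 n3 n4])
qed

lemma harmonic_pencil_comb_iff: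
  assumes lm: "nz (cross l m)"
    and n1: "(a1, b1) \<noteq> (0, 0)" and n2: "(a2, b2) \<noteq> (0, 0)"
    and n3: "(a3, b3) \<noteq> (0, 0)" and n4: "(a4, b4) \<noteq> (0, 0)"
  shows "harmonic_pencil (abs_line (comb a1 l b1 m)) (abs_line (comb a2 l b2 m))
                  (abs_line (comb a3 l b3 m)) (abs_line (comb a4 l b4 m)) \<longleftrightarrow>
    harmonic_coords a1 b1 a2 b2 a3 b3 a4 b4"
proof -
  let ?L = "\<lambda>a b. abs_line (comb a l b m)"
  have inc: "inc (abs_point (cross l m)) (?L a b)" if "(a, b) \<noteq> (0, 0)" for a b
    using comb_nonzero[OF lm that] lm by (simp add: inc_abs_iff dot_commute[of "cross l m"] dot_comb_cross)
  have centre: "meet (?L a1 b1) (?L a2 b2) = abs_point (cross l m)" if "det2 a1 b1 a2 b2 \<noteq> 0"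
    using meet_abs_cross[OF comb_nonzero[OF lm n1] comb_nonzero[OF lm n2]] that lm
    by (simp add: cross_comb_comb sc_eq_zero_iff abs_point_sc)
  show ?thesis
  proof
    assume H: "harmonic_pencil (?L a1 b1) (?L a2 b2) (?L a3 b3) (?L a4 b4)"
    then have "det2 a1 b1 a2 b2 \<noteq> 0"
      using abs_line_comb_eq_iff[OF lm n1 n2] unfolding harmonic_pencil_def by auto
    moreover obtain n where n: "\<not> inc (meet (?L a1 b1) (?L a2 b2)) n"
      "harmonic (meet n (?L a1 b1)) (meet n (?L a2 b2)) (meet n (?L a3 b3)) (meet n (?L a4 b4))"
      using H unfolding harmonic_pencil_def by blast
    moreover obtain w where w: "nz w" "n = abs_line w" using line_coords_exist by blast
    ultimately have "dot (cross l m) w \<noteq> 0" using centre lm by (simp add: inc_abs_iff)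
    then show "harmonic_coords a1 b1 a2 b2 a3 b3 a4 b4"
      using harmonic_meet_comb_iff[OF lm _ n1 n2 n3 n4] n(2) w(2) by blast
  next
    assume hc: "harmonic_coords a1 b1 a2 b2 a3 b3 a4 b4"
    obtain w where w: "dot (cross l m) w \<noteq> 0" using ex_dot_nonzero lm by blast
    have "nz w" using w by (auto simp: dot_def)
    then have "\<not> inc (meet (?L a1 b1) (?L a2 b2)) (abs_line w)"
      using w hc centre lm unfolding harmonic_coords_def by (auto simp: inc_abs_iff)
    moreover have "harmonic (meet (abs_line w) (?L a1 b1)) (meet (abs_line w) (?L a2 b2))
        (meet (abs_line w) (?L a3 b3)) (meet (abs_line w) (?L a4 b4))"
      using harmonic_meet_comb_iff[OF lm w n1 n2 n3 n4] hc by blast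
    moreover have "concurrent {?L a1 b1, ?L a2 b2, ?L a3 b3, ?L a4 b4}"
      unfolding concurrent_def using inc n1 n2 n3 n4 by blast
    moreover have "distinct [?L a1 b1, ?L a2 b2, ?L a3 b3, ?L a4 b4]"
      using hc abs_line_comb_eq_iff[OF lm] n1 n2 n3 n4 unfolding harmonic_coords_def by simp
    ultimately show "harmonic_pencil (?L a1 b1) (?L a2 b2) (?L a3 b3) (?L a4 b4)"
      unfolding harmonic_pencil_def by blast
  qed
qed

lemma harmonic_pencil_base_comb_iff:
  assumes "nz (cross l m)" "(a3, b3) \<noteq> (0, 0)" "(a4, b4) \<noteq> (0, 0)"
  shows "harmonic_pencil (abs_line l) (abs_line m) (abs_line (comb a3 l b3 m)) (abs_line (comb a4 l b4 m))
    \<longleftrightarrow> harmonic_coords 1 0 0 1 a3 b3 a4 b4"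
  using harmonic_pencil_comb_iff[OF assms(1) _ _ assms(2,3), of 1 0 0 1] by simp

lemma comb_if_orthogonal_to_common:
  assumes "nz z" "nz (cross u v)" "dot z u = 0" "dot z v = 0" "dot z w = 0"
  shows "\<exists>s t. w = comb s u t v"
proof -
  obtain k where k: "z = sc k (cross u v)"
    using orthogonal_both_imp_sc_cross assms(2-4) by metis
  then have "k \<noteq> 0" using assms(1) by (auto simp: sc_eq_zero_iff)
  moreover have "det3 w u v = dot (cross u v) w"
    using det3_perm(5)[where u = u and v = v and w = w] det3_eq_dot_cross by simp
  then have "k * det3 w u v = 0" using assms(5) unfolding k by (simp add: sc_simps)
  ultimately show ?thesis using det3_eq_zero_imp_comb assms(2) by simp
qed

lemma harmonic_fourth_unique:
  assumes "harmonic P M X Y" "harmonic P M X Y'"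
  shows "Y = Y'"
proof -
  obtain u where u: "nz u" "P = abs_point u" using point_coords_exist by blast
  obtain v where v: "nz v" "M = abs_point v" using point_coords_exist by blast
  have "P \<noteq> M" using assms(1) unfolding harmonic_def by simp
  then have uv: "nz (cross u v)" using abs_point_eq_iff[OF u(1) v(1)] u v by simp
  have on_uv: "\<exists>s t. (s, t) \<noteq> (0, 0) \<and> Z = abs_point (comb s u t v)"
    if "inc P l" "inc M l" "inc Z l" for Z l
  proof -
    obtain z where z: "nz z" "Z = abs_point z" using point_coords_exist by blast
    obtain w where w: "nz w" "l = abs_line w" using line_coords_exist by blast
    have "dot w u = 0" "dot w v = 0" "dot w z = 0"
      using that u v w z by (auto simp: inc_abs_iff dot_commute)
    then obtain s t where "z = comb s u t v" using comb_if_orthogonal_to_common w(1) uv by blast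
    then show ?thesis using z by (intro exI[of _ s] exI[of _ t]) auto
  qed
  obtain l l' where l: "inc P l" "inc M l" "inc X l" "inc Y l"
    and l': "inc P l'" "inc M l'" "inc Y' l'"
    using assms unfolding harmonic_def collinear_def by (metis insertCI)
  obtain x1 x2 y1 y2 y1' y2' where
    X: "(x1, x2) \<noteq> (0, 0)" "X = abs_point (comb x1 u x2 v)"
    and Y: "(y1, y2) \<noteq> (0, 0)" "Y = abs_point (comb y1 u y2 v)"
    and Y': "(y1', y2') \<noteq> (0, 0)" "Y' = abs_point (comb y1' u y2' v)"
    using on_uv[OF l(1,2,3)] on_uv[OF l(1,2,4)] on_uv[OF l'] by blast
  have "harmonic_coords 1 0 0 1 x1 x2 y1 y2" "harmonic_coords 1 0 0 1 x1 x2 y1' y2'"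
    using assms harmonic_base_comb_iff[OF uv X(1)] u v X Y Y' by simp_all
  then have "det2 y1 y2 y1' y2' = 0" by (rule harmonic_coords_fourth_unique)
  then show ?thesis using abs_point_comb_eq_iff[OF uv Y(1) Y'(1)] Y Y' by simp
qed

lemma harm_conj_eqI: "harmonic P M X Y \<Longrightarrow> harm_conj P M X = Y"
  unfolding harm_conj_def by (blast intro: harmonic_fourth_unique)

lemma harmonic_pencil_fourth_unique:
  assumes "harmonic_pencil l m n t" "harmonic_pencil l m n t'"
  shows "t = t'"
proof -
  obtain u where u: "nz u" "l = abs_line u" using line_coords_exist by blast
  obtain v where v: "nz v" "m = abs_line v" using line_coords_exist by blast
  have "l \<noteq> m" using assms(1) unfolding harmonic_pencil_def by simp
  then have uv: "nz (cross u v)" using abs_line_eq_iff[OF u(1) v(1)] u v by simp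
  have in_uv: "\<exists>s t. (s, t) \<noteq> (0, 0) \<and> k = abs_line (comb s u t v)"
    if "inc Z l" "inc Z m" "inc Z k" for Z k
  proof -
    obtain w where w: "nz w" "k = abs_line w" using line_coords_exist by blast
    obtain z where z: "nz z" "Z = abs_point z" using point_coords_exist by blast
    have "dot z u = 0" "dot z v = 0" "dot z w = 0" using that u v w z by (auto simp: inc_abs_iff)
    then obtain s t where "w = comb s u t v" using comb_if_orthogonal_to_common z(1) uv by blast
    then show ?thesis using w by (intro exI[of _ s] exI[of _ t]) auto
  qed
  obtain Z Z' where Z: "inc Z l" "inc Z m" "inc Z n" "inc Z t"
    and Z': "inc Z' l" "inc Z' m" "inc Z' t'"
    using assms unfolding harmonic_pencil_def concurrent_def by (metis insertCI)
  obtain x1 x2 y1 y2 y1' y2' where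
    N: "(x1, x2) \<noteq> (0, 0)" "n = abs_line (comb x1 u x2 v)"
    and T: "(y1, y2) \<noteq> (0, 0)" "t = abs_line (comb y1 u y2 v)"
    and T': "(y1', y2') \<noteq> (0, 0)" "t' = abs_line (comb y1' u y2' v)"
    using in_uv[OF Z(1,2,3)] in_uv[OF Z(1,2,4)] in_uv[OF Z'] by blast
  have "harmonic_coords 1 0 0 1 x1 x2 y1 y2" "harmonic_coords 1 0 0 1 x1 x2 y1' y2'"
    using assms harmonic_pencil_base_comb_iff[OF uv N(1)] u v N T T' by simp_all
  then have "det2 y1 y2 y1' y2' = 0" by (rule harmonic_coords_fourth_unique)
  then show ?thesis using abs_line_comb_eq_iff[OF uv T(1) T'(1)] T T' by simp
qed

lemma tangent_at_eqI:
  "harmonic_pencil (join V S1) (join V S2) (join V W) t \<Longrightarrow> tangent_at V W S1 S2 = t"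
  unfolding tangent_at_def by (blast intro: harmonic_pencil_fourth_unique)

section \<open>The conic of a quadrangle\<close>

text \<open>Writing \<open>[x y z]\<close> for \<open>det3 x y z\<close>, the harmonic condition on the pencil
  \<open>Z \<or> A, Z \<or> B; Z \<or> C, Z \<or> D\<close> turns out to be the vanishing of the quadratic form below;
  \<open>polar_form\<close> is its polarisation and \<open>polar_vec\<close> the associated linear map.\<close>
definition conic_form :: "'a::field v3 \<Rightarrow> 'a v3 \<Rightarrow> 'a v3 \<Rightarrow> 'a v3 \<Rightarrow> 'a v3 \<Rightarrow> 'a" where
  "conic_form a c b d z = det3 z a c * det3 z b d + det3 z a d * det3 z b c"

definition polar_form :: "'a::field v3 \<Rightarrow> 'a v3 \<Rightarrow> 'a v3 \<Rightarrow> 'a v3 \<Rightarrow> 'a v3 \<Rightarrow> 'a v3 \<Rightarrow> 'a" where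
  "polar_form a c b d u v = det3 u a c * det3 v b d + det3 v a c * det3 u b d
                          + det3 u a d * det3 v b c + det3 v a d * det3 u b c"

definition polar_vec :: "'a::field v3 \<Rightarrow> 'a v3 \<Rightarrow> 'a v3 \<Rightarrow> 'a v3 \<Rightarrow> 'a v3 \<Rightarrow> 'a v3" where
  "polar_vec a c b d u =
     (polar_form a c b d u (1, 0, 0), polar_form a c b d u (0, 1, 0), polar_form a c b d u (0, 0, 1))"

definition polar :: "'a::field v3 \<Rightarrow> 'a v3 \<Rightarrow> 'a v3 \<Rightarrow> 'a v3 \<Rightarrow> 'a point \<Rightarrow> 'a line" where
  "polar a c b d P = abs_line (polar_vec a c b d (rep_point P))"

lemma polar_form_commute: "polar_form a c b d u v = polar_form a c b d v u"
  unfolding polar_form_def by (simp add: algebra_simps)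

lemma polar_form_self: "polar_form a c b d u u = 2 * conic_form a c b d u"
  unfolding polar_form_def conic_form_def by (simp add: algebra_simps)

lemma polar_form_comb_left:
  "polar_form a c b d (comb s x t y) v = s * polar_form a c b d x v + t * polar_form a c b d y v"
  unfolding polar_form_def det3_comb1 by (simp add: algebra_simps)

lemma polar_form_comb_right:
  "polar_form a c b d v (comb s x t y) = s * polar_form a c b d v x + t * polar_form a c b d v y"
  using polar_form_comb_left polar_form_commute by metis

lemma conic_form_comb: "conic_form a c b d (comb s x t y) =
    s\<^sup>2 * conic_form a c b d x + s * t * polar_form a c b d x y + t\<^sup>2 * conic_form a c b d y"
  unfolding conic_form_def polar_form_def det3_comb1 by (simp add: algebra_simps power2_eq_square)

lemma polar_vec_comb:
  "polar_vec a c b d (comb s x t y) = comb s (polar_vec a c b d x) t (polar_vec a c b d y)"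
  unfolding polar_vec_def polar_form_comb_left by (simp add: comb_def)

lemma polar_form_sc_left: "polar_form a c b d (sc k u) v = k * polar_form a c b d u v"
  unfolding polar_form_def by (simp add: sc_simps algebra_simps)

lemma polar_form_sc_right: "polar_form a c b d u (sc k v) = k * polar_form a c b d u v"
  using polar_form_sc_left polar_form_commute by metis

lemma conic_form_sc: "conic_form a c b d (sc k u) = k\<^sup>2 * conic_form a c b d u"
  unfolding conic_form_def by (simp add: sc_simps algebra_simps power2_eq_square)

lemma polar_vec_sc: "polar_vec a c b d (sc k u) = sc k (polar_vec a c b d u)"
  unfolding polar_vec_def polar_form_sc_left by (simp add: sc_def)

lemma polar_vec_zero [simp]: "polar_vec a c b d (0, 0, 0) = (0, 0, 0)"
  using polar_vec_sc[of a c b d 0 "(0, 0, 0)"] by (simp add: sc_def)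

lemma conic_form_vertices:
  "conic_form a c b d a = 0" "conic_form a c b d c = 0"
  "conic_form a c b d b = 0" "conic_form a c b d d = 0"
  unfolding conic_form_def by simp_all

lemma dot_polar_vec: "dot v (polar_vec a c b d u) = polar_form a c b d u v"
proof -
  have det3_linear: "det3 (v1, v2, v3) x y =
      v1 * det3 (1, 0, 0) x y + v2 * det3 (0, 1, 0) x y + v3 * det3 (0, 0, 1) x y"
    for v1 v2 v3 and x y :: "'a v3"
    by (cases x rule: prod_cases3; cases y rule: prod_cases3) (simp add: vec_defs algebra_simps)
  obtain v1 v2 v3 where v: "v = (v1, v2, v3)" by (cases v rule: prod_cases3)
  show ?thesis unfolding v polar_vec_def polar_form_def dot_def
    by (simp add: det3_linear[of v1 v2 v3] algebra_simps)
qed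

lemma polar_form_at_vertex:
  "polar_form a c b d a v = det3 v a c * det3 a b d + det3 v a d * det3 a b c"
  unfolding polar_form_def by simp

lemma polar_form_a_b: "polar_form a c b d a b = - 2 * det3 a b c * det3 a b d"
proof -
  have "det3 b a c = - det3 a b c" "det3 b a d = - det3 a b d" by (rule det3_perm(1))+
  then show ?thesis unfolding polar_form_at_vertex by simp
qed

lemma polar_vec_vertex:
  "polar_vec a c b d a = comb (det3 a b d) (cross a c) (det3 a b c) (cross a d)"
proof (rule vec_eq_if_dot_eq)
  fix v
  show "dot v (polar_vec a c b d a) = dot v (comb (det3 a b d) (cross a c) (det3 a b c) (cross a d))"
    unfolding dot_polar_vec dot_comb_right by (simp add: polar_form_def det3_def algebra_simps)
qed

lemma polar_form_rotate: "polar_form c b d a = polar_form a c b d"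
  unfolding polar_form_def
  by (intro ext) (simp add: det3_perm(2)[of _ b c] det3_perm(2)[of _ a d]
      det3_perm(2)[of _ a c] det3_perm(2)[of _ b d] algebra_simps)

lemma conic_form_rotate: "conic_form c b d a = conic_form a c b d"
proof (intro ext)
  fix z
  have "det3 z c b = - det3 z b c" "det3 z d a = - det3 z a d" "det3 z c a = - det3 z a c"
    "det3 z d b = - det3 z b d" by (rule det3_perm(2))+
  then show "conic_form c b d a z = conic_form a c b d z"
    unfolding conic_form_def by (simp add: algebra_simps)
qed

lemma polar_rotate: "polar c b d a = polar a c b d"
  unfolding polar_def polar_vec_def polar_form_rotate[where a = a and c = c and b = b and d = d] ..

section \<open>The polarity of a quadrangle\<close>

locale quadrangle =
  fixes a c b d :: "'a::field v3"
  assumes det_acb: "det3 a c b \<noteq> 0" and det_acd: "det3 a c d \<noteq> 0"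
    and det_abd: "det3 a b d \<noteq> 0" and det_cbd: "det3 c b d \<noteq> 0"
    and two_nonzero: "(2::'a) \<noteq> 0"
begin

abbreviation "conic \<equiv> conic_form a c b d"
abbreviation "pform \<equiv> polar_form a c b d"
abbreviation "pvec \<equiv> polar_vec a c b d"
abbreviation "pol \<equiv> polar a c b d"
abbreviation "curve \<equiv> harmonic_curve (abs_point a) (abs_point c) (abs_point b) (abs_point d)"

lemma det_abc: "det3 a b c \<noteq> 0" and det_bcd: "det3 b c d \<noteq> 0"
  using det_acb det_cbd det3_perm(2)[of a b c] det3_perm(1)[of b c d] by auto

lemma rotate: "quadrangle c b d a"
proof
  show "det3 c b d \<noteq> 0" by (rule det_cbd)
  show "det3 c b a \<noteq> 0" using det_abc det3_perm(3)[of a b c] by simp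
  show "det3 c d a \<noteq> 0" using det_acd det3_perm(4)[where u = a and v = c and w = d] by simp
  show "det3 b d a \<noteq> 0" using det_abd det3_perm(4)[where u = a and v = b and w = d] by simp
qed (rule two_nonzero)

lemma vertices_nonzero: "nz a" "nz b" "nz c" "nz d"
  using det_acb det_cbd by (auto simp: vec_defs)

lemma cross_ab_nonzero: "nz (cross a b)"
  using det_abd by (auto simp: det3_eq_dot_cross)

lemma polar_vec_nonzero:
  assumes "nz u"
  shows "nz (pvec u)"
proof
  assume "pvec u = (0, 0, 0)"
  then have B: "pform u v = 0" for v using dot_polar_vec[of v a c b d u] by simp
  define x where "x = det3 u b c"
  define y where "y = det3 a u c"
  define w where "w = det3 a b u"
  have pf: "pform u a = - (2 * y * det3 a b d + w * det3 a c d)"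
    "pform u b = - 2 * x * det3 a b d + w * det3 b c d"
    "pform u c = y * det3 b c d - x * det3 a c d"
    unfolding x_def y_def w_def
    by (cases a rule: prod_cases3; cases b rule: prod_cases3; cases c rule: prod_cases3;
        cases d rule: prod_cases3; cases u rule: prod_cases3; simp add: vec_defs polar_form_def algebra_simps)+
  have e1: "2 * y * det3 a b d + w * det3 a c d = 0" using B[of a] pf(1) by (metis neg_equal_0_iff_equal)
  have e2: "- 2 * x * det3 a b d + w * det3 b c d = 0" using B[of b] pf(2) by simp
  have e3: "y * det3 b c d - x * det3 a c d = 0" using B[of c] pf(3) by simp
  have w: "w = 2 * x * det3 a b d / det3 b c d" using e2 det_bcd by (simp add: field_simps)
  have y: "y = x * det3 a c d / det3 b c d" using e3 det_bcd by (simp add: field_simps)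
  have "2 * (2 * (x * det3 a b d * det3 a c d)) = 0"
    using e1 det_bcd unfolding w y by (simp add: field_simps)
  then have "x = 0" using two_nonzero det_abd det_acd unfolding mult_eq_0_iff by blast
  then have "y = 0" "w = 0" using w y by simp_all
  with \<open>x = 0\<close> have "u = (0, 0, 0)"
    using det3_eq_zero_if_all det_abc unfolding x_def y_def w_def by blast
  with assms show False by simp
qed

lemma polar_abs:
  assumes "nz u"
  shows "pol (abs_point u) = abs_line (pvec u)"
proof -
  obtain k where k: "k \<noteq> 0" "rep_point (abs_point u) = sc k u" using rep_abs_point assms by blast
  show ?thesis
    unfolding polar_def k(2) polar_vec_sc using abs_line_sc k(1) polar_vec_nonzero[OF assms] by blast
qed

lemma inc_polar_iff:
  "nz u \<Longrightarrow> nz x \<Longrightarrow> inc (abs_point x) (pol (abs_point u)) \<longleftrightarrow> pform u x = 0"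
  by (simp add: polar_abs inc_abs_iff polar_vec_nonzero dot_polar_vec)

lemma inj_polar: "inj pol"
proof (rule injI)
  fix P Q assume e: "pol P = pol Q"
  obtain u where u: "nz u" "P = abs_point u" using point_coords_exist by blast
  obtain v where v: "nz v" "Q = abs_point v" using point_coords_exist by blast
  have "cross (pvec u) (pvec v) = (0, 0, 0)"
    using e u v by (simp add: polar_abs abs_line_eq_iff polar_vec_nonzero)
  then obtain k where k: "pvec u = sc k (pvec v)"
    using cross_eq_zero_imp_sc polar_vec_nonzero[OF v(1)] by blast
  have "pvec (comb 1 u (-k) v) = (0, 0, 0)" unfolding polar_vec_comb k
    by (cases "pvec v" rule: prod_cases3) (simp add: vec_defs)
  then have "comb 1 u (-k) v = (0, 0, 0)" using polar_vec_nonzero by blast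
  then have "u = sc k v" by (cases u rule: prod_cases3; cases v rule: prod_cases3) (simp add: vec_defs)
  then show "P = Q" using u v by (simp add: abs_point_eq_iff cross_sc_self)
qed

text \<open>The pole of \<open>l\<close> is the meet of the polars of two points of \<open>l\<close>.\<close>
lemma polar_surj_abs:
  assumes w: "nz w"
  shows "\<exists>r. nz r \<and> pol (abs_point r) = abs_line w"
proof -
  obtain p q where pq: "nz p" "nz q" "nz (cross p q)" "dot p w = 0" "dot q w = 0"
    using orthogonal_pair_exists w by blast
  have "pol (abs_point p) \<noteq> pol (abs_point q)"
    using pq inj_polar by (simp add: abs_point_eq_iff inj_eq)
  then have r: "nz (cross (pvec p) (pvec q))"
    using pq by (simp add: polar_abs abs_line_eq_iff polar_vec_nonzero)
  define r where "r = cross (pvec p) (pvec q)"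
  have "dot p (pvec r) = dot r (pvec p)" "dot q (pvec r) = dot r (pvec q)"
    by (simp_all add: dot_polar_vec polar_form_commute)
  then have "dot p (pvec r) = 0" "dot q (pvec r) = 0" unfolding r_def by simp_all
  then have "join (abs_point p) (abs_point q) = abs_line (pvec r)"
    using join_abs_eq[OF polar_vec_nonzero pq(1,2,3)] r unfolding r_def
    by (simp add: dot_commute)
  moreover have "join (abs_point p) (abs_point q) = abs_line w"
    using join_abs_eq[OF w pq(1,2,3)] pq by (simp add: dot_commute)
  ultimately show ?thesis using r unfolding r_def by (metis polar_abs)
qed

lemma polar_vec_surj:
  assumes w: "nz w"
  shows "\<exists>r. pvec r = w"
proof -
  obtain r where r: "nz r" "pol (abs_point r) = abs_line w" using polar_surj_abs w by blast
  then have "cross (pvec r) w = (0, 0, 0)"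
    using w by (simp add: polar_abs abs_line_eq_iff polar_vec_nonzero)
  then obtain k where k: "pvec r = sc k w" using cross_eq_zero_imp_sc w by blast
  then have "k \<noteq> 0" using polar_vec_nonzero[OF r(1)] by (auto simp: sc_eq_zero_iff)
  then have "pvec (sc (1 / k) r) = w" by (simp add: polar_vec_sc k sc_sc sc_1)
  then show ?thesis by blast
qed

lemma polarity_polar: "polarity pol"
  unfolding polarity_def
proof
  show "bij pol"
  proof (rule bijI[OF inj_polar], rule surjI)
    fix l :: "'a line"
    obtain w where w: "nz w" "l = abs_line w" using line_coords_exist by blast
    show "pol (SOME P. pol P = l) = l"
      by (rule someI_ex) (use polar_surj_abs[OF w(1)] w(2) in blast)
  qed
  show "\<forall>P Q. inc P (pol Q) = inc Q (pol P)"
  proof (intro allI)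
    fix P Q :: "'a point"
    obtain u where u: "nz u" "P = abs_point u" using point_coords_exist by blast
    obtain v where v: "nz v" "Q = abs_point v" using point_coords_exist by blast
    show "inc P (pol Q) = inc Q (pol P)"
      unfolding u(2) v(2) using inc_polar_iff u(1) v(1) polar_form_commute by metis
  qed
qed

end

section \<open>The harmonic curve is the conic\<close>

lemma cross_eq_zero_if_on_two_lines:
  assumes "dot p (cross x y) = 0" "dot p (cross x z) = 0" "det3 x y z \<noteq> 0"
  shows "cross p x = (0, 0, 0)"
proof -
  have "nz (cross (cross x y) (cross x z))"
    using assms(3) by (auto simp: cross_cross_common sc_eq_zero_iff)
  then obtain k where "p = sc k (cross (cross x y) (cross x z))"
    using orthogonal_both_imp_sc_cross assms(1,2) by blast
  then show ?thesis by (simp add: cross_cross_common sc_sc cross_sc_self)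
qed

context quadrangle
begin

lemma vertex_if_on_two_sides:
  shows on_ac_ad: "det3 p a c = 0 \<Longrightarrow> det3 p a d = 0 \<Longrightarrow> cross p a = (0, 0, 0)"
    and on_ac_bc: "det3 p a c = 0 \<Longrightarrow> det3 p b c = 0 \<Longrightarrow> cross p c = (0, 0, 0)"
    and on_bd_bc: "det3 p b d = 0 \<Longrightarrow> det3 p b c = 0 \<Longrightarrow> cross p b = (0, 0, 0)"
    and on_bd_ad: "det3 p b d = 0 \<Longrightarrow> det3 p a d = 0 \<Longrightarrow> cross p d = (0, 0, 0)"
proof -
  have swap: "det3 p v u = 0" if "det3 p u v = 0" for u v
    using that det3_perm(2)[where u = p and v = u and w = v] by simp
  have "det3 c a b \<noteq> 0" "det3 b d c \<noteq> 0" "det3 d b a \<noteq> 0"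
    using det_abc det_cbd det_abd det3_perm(5)[where u = a and v = b and w = c]
      det3_perm(4)[where u = c and v = b and w = d] det3_perm(3)[where u = a and v = b and w = d]
    by simp_all
  note on_two_lines = this det_acd
  show "det3 p a c = 0 \<Longrightarrow> det3 p a d = 0 \<Longrightarrow> cross p a = (0, 0, 0)"
    using cross_eq_zero_if_on_two_lines[of p a c d] on_two_lines by (simp add: det3_def)
  show "det3 p a c = 0 \<Longrightarrow> det3 p b c = 0 \<Longrightarrow> cross p c = (0, 0, 0)"
    using cross_eq_zero_if_on_two_lines[of p c a b] on_two_lines swap[of a c] swap[of b c]
    by (simp add: det3_def)
  show "det3 p b d = 0 \<Longrightarrow> det3 p b c = 0 \<Longrightarrow> cross p b = (0, 0, 0)"
    using cross_eq_zero_if_on_two_lines[of p b d c] on_two_lines by (simp add: det3_def)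
  show "det3 p b d = 0 \<Longrightarrow> det3 p a d = 0 \<Longrightarrow> cross p d = (0, 0, 0)"
    using cross_eq_zero_if_on_two_lines[of p d b a] on_two_lines swap[of b d] swap[of a d]
    by (simp add: det3_def)
qed

lemma conic_on_line_ab:
  assumes "det3 w a b = 0" "conic w = 0"
  shows "cross w a = (0, 0, 0) \<or> cross w b = (0, 0, 0)"
proof -
  obtain s t where st: "w = comb s a t b"
    using det3_eq_zero_imp_comb[OF assms(1) cross_ab_nonzero] by blast
  have "conic w = s * t * (- 2 * det3 a b c * det3 a b d)"
    unfolding st conic_form_comb conic_form_vertices polar_form_a_b by simp
  then have "s = 0 \<or> t = 0" using assms(2) det_abc det_abd two_nonzero by simp
  then show ?thesis using st by (auto simp: comb_zero_coeff cross_sc_self)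
qed

lemma conic_point_off_sides:
  assumes nv: "\<forall>v\<in>{a, b, c, d}. nz (cross y v)" and q: "conic y = 0"
  shows "det3 y a c \<noteq> 0" "det3 y b d \<noteq> 0" "det3 y a d \<noteq> 0" "det3 y b c \<noteq> 0"
proof -
  have e: "det3 y a c * det3 y b d + det3 y a d * det3 y b c = 0"
    using q unfolding conic_form_def .
  have vertices: "nz (cross y a)" "nz (cross y b)" "nz (cross y c)" "nz (cross y d)"
    using nv by auto
  show "det3 y a c \<noteq> 0"
  proof
    assume "det3 y a c = 0"
    then have "det3 y a d = 0 \<or> det3 y b c = 0" using e by simp
    then show False using on_ac_ad on_ac_bc vertices \<open>det3 y a c = 0\<close> by blast
  qed
  show "det3 y b d \<noteq> 0"
  proof
    assume "det3 y b d = 0"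
    then have "det3 y a d = 0 \<or> det3 y b c = 0" using e by simp
    then show False using on_bd_bc on_bd_ad vertices \<open>det3 y b d = 0\<close> by blast
  qed
  show "det3 y a d \<noteq> 0"
  proof
    assume "det3 y a d = 0"
    then have "det3 y a c = 0 \<or> det3 y b d = 0" using e by simp
    then show False using on_ac_ad on_bd_ad vertices \<open>det3 y a d = 0\<close> by blast
  qed
  show "det3 y b c \<noteq> 0"
  proof
    assume "det3 y b c = 0"
    then have "det3 y a c = 0 \<or> det3 y b d = 0" using e by simp
    then show False using on_ac_bc on_bd_bc vertices \<open>det3 y b c = 0\<close> by blast
  qed
qed

text \<open>For a point other than the vertices, the conic equation already forces the four lines of the
  pencil to be distinct, because the characteristic is not 2.\<close>
lemma harmonic_coords_iff_conic:
  assumes nv: "\<forall>v\<in>{a, b, c, d}. nz (cross y v)"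
  shows "harmonic_coords 1 0 0 1 (- det3 y b c) (det3 y a c) (- det3 y b d) (det3 y a d)
    \<longleftrightarrow> conic y = 0"
proof -
  define X1 where "X1 = det3 y a c"
  define X2 where "X2 = det3 y b d"
  define X3 where "X3 = det3 y a d"
  define X4 where "X4 = det3 y b c"
  have Q: "conic y = X1 * X2 + X3 * X4" unfolding conic_form_def X1_def X2_def X3_def X4_def ..
  have "harmonic_coords 1 0 0 1 (- X4) X1 (- X2) X3 \<longleftrightarrow>
    X1 \<noteq> 0 \<and> X3 \<noteq> 0 \<and> X4 \<noteq> 0 \<and> X2 \<noteq> 0 \<and> X1 * X2 - X4 * X3 \<noteq> 0 \<and> X1 * X2 + X3 * X4 = 0"
    unfolding harmonic_coords_def det2_def by (simp add: algebra_simps)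
  also have "\<dots> \<longleftrightarrow> X1 * X2 + X3 * X4 = 0"
  proof (intro iffI, blast)
    assume e: "X1 * X2 + X3 * X4 = 0"
    then have "X1 \<noteq> 0" "X2 \<noteq> 0" "X3 \<noteq> 0" "X4 \<noteq> 0"
      using conic_point_off_sides[OF nv] unfolding Q X1_def X2_def X3_def X4_def by simp_all
    moreover have "X1 * X2 - X4 * X3 \<noteq> 0"
    proof
      assume "X1 * X2 - X4 * X3 = 0"
      moreover have "2 * (X3 * X4) = (X1 * X2 + X3 * X4) - (X1 * X2 - X4 * X3)"
        by (simp add: algebra_simps)
      ultimately have "2 * (X3 * X4) = 0" using e by simp
      then show False using \<open>X3 \<noteq> 0\<close> \<open>X4 \<noteq> 0\<close> two_nonzero by simp
    qed
    ultimately show "X1 \<noteq> 0 \<and> X3 \<noteq> 0 \<and> X4 \<noteq> 0 \<and> X2 \<noteq> 0 \<and> X1 * X2 - X4 * X3 \<noteq> 0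
      \<and> X1 * X2 + X3 * X4 = 0"
      using e by blast
  qed
  finally show ?thesis unfolding Q X1_def X2_def X3_def X4_def .
qed

lemma harmonic_pencil_at_iff:
  assumes p: "nz p" and nv: "\<forall>v\<in>{a, b, c, d}. nz (cross p v)" and pab: "det3 p a b \<noteq> 0"
  shows "harmonic_pencil (join (abs_point p) (abs_point a)) (join (abs_point p) (abs_point b))
      (join (abs_point p) (abs_point c)) (join (abs_point p) (abs_point d)) \<longleftrightarrow> conic p = 0"
proof -
  define l where "l = cross p a"
  define m where "m = cross p b"
  define k where "k = det3 a b p"
  have lm: "nz (cross l m)" unfolding l_def m_def cross_cross_common
    using pab p by (simp add: sc_eq_zero_iff)
  have k: "k \<noteq> 0" using pab det3_perm(5)[where u = a and v = b and w = p] unfolding k_def by simp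
  have join_v: "join (abs_point p) (abs_point v) = abs_line (cross p v)" if "v \<in> {a, b, c, d}" for v
  proof -
    have "nz v" "nz (cross p v)" using that vertices_nonzero nv by auto
    then show ?thesis by (rule join_abs_cross[OF p])
  qed
  have eqC: "comb (- det3 p b c) l (det3 p a c) m = sc k (cross p c)"
    and eqD: "comb (- det3 p b d) l (det3 p a d) m = sc k (cross p d)"
    unfolding l_def m_def k_def by (rule cross_in_pencil)+
  have nzC: "nz (sc k (cross p c))" and nzD: "nz (sc k (cross p d))"
    using k nv by (simp_all add: sc_eq_zero_iff)
  have nC: "(- det3 p b c, det3 p a c) \<noteq> (0, 0)"
  proof
    assume "(- det3 p b c, det3 p a c) = (0, 0)"
    then show False using eqC nzC by simp
  qed
  have nD: "(- det3 p b d, det3 p a d) \<noteq> (0, 0)"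
  proof
    assume "(- det3 p b d, det3 p a d) = (0, 0)"
    then show False using eqD nzD by simp
  qed
  have JC: "join (abs_point p) (abs_point c) = abs_line (comb (- det3 p b c) l (det3 p a c) m)"
    unfolding eqC using join_v[of c] abs_line_sc[OF k] nv by simp
  have JD: "join (abs_point p) (abs_point d) = abs_line (comb (- det3 p b d) l (det3 p a d) m)"
    unfolding eqD using join_v[of d] abs_line_sc[OF k] nv by simp
  have JA: "join (abs_point p) (abs_point a) = abs_line l"
    and JB: "join (abs_point p) (abs_point b) = abs_line m"
    using join_v unfolding l_def m_def by simp_all
  show ?thesis
    unfolding JA JB JC JD harmonic_pencil_base_comb_iff[OF lm nC nD]
    by (rule harmonic_coords_iff_conic[OF nv])
qed

lemma harmonic_curve_iff_conic:
  assumes p: "nz p"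
  shows "abs_point p \<in> curve \<longleftrightarrow> conic p = 0"
proof (cases "\<forall>v\<in>{a, b, c, d}. nz (cross p v)")
  case False
  then obtain v where v: "v \<in> {a, b, c, d}" "cross p v = (0, 0, 0)" by blast
  then obtain k where "p = sc k v" using cross_eq_zero_imp_sc vertices_nonzero by blast
  then have "conic p = 0" using v(1) by (auto simp: conic_form_sc conic_form_vertices)
  moreover have "abs_point p \<in> {abs_point a, abs_point c, abs_point b, abs_point d}"
    using v abs_point_eq_iff[OF p] vertices_nonzero by auto
  ultimately show ?thesis unfolding harmonic_curve_def by auto
next
  case nv: True
  then have not_vertex: "abs_point p \<notin> {abs_point a, abs_point b, abs_point c, abs_point d}"
    using abs_point_eq_iff[OF p] vertices_nonzero by auto
  show ?thesis
  proof (cases "det3 p a b = 0")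
    case True
    then have "conic p \<noteq> 0" using conic_on_line_ab[OF True] nv by auto
    moreover have "join (abs_point p) (abs_point a) = join (abs_point p) (abs_point b)"
      using join_abs_eq[OF _ p, of "cross p a"] True nv vertices_nonzero
      by (simp add: det3_eq_dot_cross dot_commute)
    ultimately show ?thesis
      using not_vertex unfolding harmonic_curve_def harmonic_pencil_def by auto
  next
    case False
    then show ?thesis
      using not_vertex harmonic_pencil_at_iff[OF p nv] unfolding harmonic_curve_def by auto
  qed
qed

end

section \<open>Harmonic reflections preserve the curve\<close>

context quadrangle
begin

text \<open>In coordinates, \<open>\<rho>\<^sub>P\<^sub>,\<^sub>p\<close> is induced by the linear map
  \<open>x \<mapsto> B(p,p) x - 2 B(x,p) p\<close>, where \<open>B\<close> is the polar form.\<close>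
definition reflect_vec :: "'a v3 \<Rightarrow> 'a v3 \<Rightarrow> 'a v3" where
  "reflect_vec p x = comb (pform p p) x (- 2 * pform x p) p"

lemma conic_reflect_vec: "conic (reflect_vec p x) = (pform p p)\<^sup>2 * conic x"
  unfolding reflect_vec_def conic_form_comb polar_form_self
  by (simp add: polar_form_commute algebra_simps power2_eq_square)

lemma reflect_vec_involution: "reflect_vec p (reflect_vec p x) = sc ((pform p p)\<^sup>2) x"
proof -
  have "pform (reflect_vec p x) p = - pform p p * pform x p"
    unfolding reflect_vec_def polar_form_comb_left by (simp add: algebra_simps)
  then show ?thesis
    unfolding reflect_vec_def[of p "reflect_vec p x"]
    by (simp add: reflect_vec_def comb_comb_same comb_zero_coeff power2_eq_square)
qed

lemma meet_join_polar:
  assumes p: "nz p" and q: "conic p \<noteq> 0" and x: "nz x" and xp: "nz (cross x p)"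
  shows "meet (join (abs_point x) (abs_point p)) (pol (abs_point p))
    = abs_point (comb (pform p p) x (- pform x p) p)"
proof -
  have Bpp: "pform p p \<noteq> 0" using q two_nonzero by (simp add: polar_form_self)
  have "dot (comb (pform p p) x (- pform x p) p) (pvec p) = 0"
    unfolding dot_polar_vec polar_form_comb_right
    using polar_form_commute[of a c b d p x] by (simp add: algebra_simps)
  moreover have "nz (cross (cross x p) (pvec p))"
  proof
    assume "cross (cross x p) (pvec p) = (0, 0, 0)"
    then obtain k where k: "cross x p = sc k (pvec p)"
      using cross_eq_zero_imp_sc polar_vec_nonzero[OF p] by blast
    have "dot p (cross x p) = 0" by simp
    then have "k * pform p p = 0" unfolding k dot_polar_vec[symmetric] by (simp add: sc_simps)
    then show False using k Bpp xp by (simp add: sc_eq_zero_iff)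
  qed
  ultimately show ?thesis
    using meet_abs_eq[OF comb_nonzero[OF xp] xp polar_vec_nonzero[OF p]] Bpp
      join_abs_cross[OF x p xp] polar_abs[OF p] by (simp add: dot_comb_cross)
qed

lemma harmonic_reflection_abs:
  assumes p: "nz p" and q: "conic p \<noteq> 0" and x: "nz x"
  shows "nz (reflect_vec p x) \<and>
    harmonic_reflection (abs_point p) (pol (abs_point p)) (abs_point x) = abs_point (reflect_vec p x)"
proof -
  define Bpp where "Bpp = pform p p"
  have Bpp: "Bpp \<noteq> 0" using q two_nonzero unfolding Bpp_def polar_form_self by simp
  consider (at_pole) "cross x p = (0, 0, 0)" | (on_polar) "nz (cross x p)" "pform p x = 0"
    | (general) "nz (cross x p)" "pform p x \<noteq> 0" by blast
  then show ?thesis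
  proof cases
    case at_pole
    then obtain k where k: "x = sc k p" using cross_eq_zero_imp_sc p by blast
    then have k0: "k \<noteq> 0" using x by (auto simp: sc_eq_zero_iff)
    have R: "reflect_vec p x = sc (- k * Bpp) p"
      unfolding reflect_vec_def k comb_sc_same polar_form_sc_left Bpp_def by (simp add: algebra_simps)
    have "abs_point x = abs_point p" unfolding k by (rule abs_point_sc[OF k0 p])
    moreover have "abs_point (reflect_vec p x) = abs_point p"
      unfolding R by (rule abs_point_sc[OF _ p]) (use k0 Bpp in simp)
    ultimately show ?thesis unfolding harmonic_reflection_def R using k0 Bpp p by (simp add: sc_eq_zero_iff)
  next
    case on_polar
    have R: "reflect_vec p x = sc Bpp x"
      unfolding reflect_vec_def Bpp_def using on_polar polar_form_commute[of a c b d x p]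
      by (simp add: comb_zero_coeff)
    have "inc (abs_point x) (pol (abs_point p))" using inc_polar_iff[OF p x] on_polar by simp
    then show ?thesis
      unfolding harmonic_reflection_def R using abs_point_sc[OF Bpp x] Bpp x by (simp add: sc_eq_zero_iff)
  next
    case general
    define Bxp where "Bxp = pform x p"
    have Bxp: "Bxp \<noteq> 0" using general polar_form_commute unfolding Bxp_def by metis
    define M where "M = comb Bpp x (- Bxp) p"
    have meet_M: "meet (join (abs_point x) (abs_point p)) (pol (abs_point p)) = abs_point M"
      using meet_join_polar[OF p q x general(1)] unfolding M_def Bpp_def Bxp_def .
    have "harmonic_coords 0 1 Bpp (- Bxp) 1 0 Bpp (- 2 * Bxp)"
      unfolding harmonic_coords_def det2_def using Bpp Bxp two_nonzero by (simp add: algebra_simps)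
    then have "harmonic (abs_point p) (abs_point M) (abs_point x) (abs_point (reflect_vec p x))"
      using harmonic_comb_iff[OF general(1), of 0 1 Bpp "- Bxp" 1 0 Bpp "- 2 * Bxp"] Bpp
      unfolding M_def reflect_vec_def Bpp_def[symmetric] Bxp_def[symmetric] by simp
    then have "harm_conj (abs_point p) (abs_point M) (abs_point x) = abs_point (reflect_vec p x)"
      by (rule harm_conj_eqI)
    moreover have "abs_point x \<noteq> abs_point p" using general x p by (simp add: abs_point_eq_iff)
    moreover have "\<not> inc (abs_point x) (pol (abs_point p))"
      using inc_polar_iff[OF p x] general by simp
    moreover have "nz (reflect_vec p x)"
      unfolding reflect_vec_def Bpp_def[symmetric] using comb_nonzero[OF general(1)] Bpp by simp
    ultimately show ?thesis unfolding harmonic_reflection_def meet_M by simp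
  qed
qed

lemma harmonic_reflection_image_curve:
  assumes p: "nz p" and q: "conic p \<noteq> 0"
  shows "harmonic_reflection (abs_point p) (pol (abs_point p)) ` curve = curve"
    (is "?\<rho> ` _ = _")
proof
  have Bpp: "pform p p \<noteq> 0" using q two_nonzero by (simp add: polar_form_self)
  have on_curve: "abs_point (reflect_vec p x) \<in> curve \<longleftrightarrow> abs_point x \<in> curve" if x: "nz x" for x
  proof -
    have "nz (reflect_vec p x)" using harmonic_reflection_abs[OF p q x] by blast
    then have "abs_point (reflect_vec p x) \<in> curve \<longleftrightarrow> conic (reflect_vec p x) = 0"
      by (rule harmonic_curve_iff_conic)
    also have "\<dots> \<longleftrightarrow> conic x = 0" unfolding conic_reflect_vec using Bpp by simp
    also have "\<dots> \<longleftrightarrow> abs_point x \<in> curve" using harmonic_curve_iff_conic[OF x] by blast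
    finally show ?thesis .
  qed
  show "?\<rho> ` curve \<subseteq> curve"
  proof
    fix Z assume "Z \<in> ?\<rho> ` curve"
    then obtain X where X: "X \<in> curve" "Z = ?\<rho> X" by blast
    obtain x where x: "nz x" "X = abs_point x" using point_coords_exist by blast
    have "Z = abs_point (reflect_vec p x)" using X(2) x harmonic_reflection_abs[OF p q x(1)] by simp
    then show "Z \<in> curve" using on_curve[OF x(1)] X(1) x(2) by simp
  qed
  show "curve \<subseteq> ?\<rho> ` curve"
  proof
    fix Z assume Z: "Z \<in> curve"
    obtain z where z: "nz z" "Z = abs_point z" using point_coords_exist by blast
    have R: "nz (reflect_vec p z)" using harmonic_reflection_abs[OF p q z(1)] by simp
    have "?\<rho> (abs_point (reflect_vec p z)) = Z"
      using harmonic_reflection_abs[OF p q R] reflect_vec_involution z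
        abs_point_sc[of "(pform p p)\<^sup>2" z] Bpp by simp
    moreover have "abs_point (reflect_vec p z) \<in> curve" using on_curve z Z by simp
    ultimately show "Z \<in> ?\<rho> ` curve" by (metis image_eqI)
  qed
qed

end

section \<open>Tangents and the tangent bundle\<close>

context quadrangle
begin

lemma tangent_at_vertex:
  "tangent_at (abs_point a) (abs_point b) (abs_point c) (abs_point d) = pol (abs_point a)"
proof (rule tangent_at_eqI)
  define l where "l = cross a c"
  define m where "m = cross a d"
  have lm: "nz (cross l m)"
    unfolding l_def m_def cross_cross_common using det_acd vertices_nonzero by (simp add: sc_eq_zero_iff)
  then have nz_lm: "nz l" "nz m" by (auto simp: vec_defs)
  have "comb (det3 a b d) l (- det3 a b c) m = sc (det3 a c d) (cross a b)"
    using cross_in_pencil[of a d b c] det3_perm(2)[where u = a and v = b and w = d]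
      det3_perm(2)[where u = a and v = b and w = c] det3_perm(4)[where u = a and v = c and w = d]
    unfolding l_def m_def by simp
  then have "join (abs_point a) (abs_point b) = abs_line (comb (det3 a b d) l (- det3 a b c) m)"
    using join_abs_cross[OF vertices_nonzero(1,2) cross_ab_nonzero]
      abs_line_sc[OF det_acd cross_ab_nonzero] by simp
  moreover have "join (abs_point a) (abs_point c) = abs_line l"
    "join (abs_point a) (abs_point d) = abs_line m"
    using join_abs_cross[OF vertices_nonzero(1,3)] join_abs_cross[OF vertices_nonzero(1,4)] nz_lm
    unfolding l_def m_def by simp_all
  moreover have "pol (abs_point a) = abs_line (comb (det3 a b d) l (det3 a b c) m)"
    unfolding polar_abs[OF vertices_nonzero(1)] polar_vec_vertex l_def m_def ..
  moreover have "harmonic_coords 1 0 0 1 (det3 a b d) (- det3 a b c) (det3 a b d) (det3 a b c)"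
    using det_abd det_abc two_nonzero unfolding harmonic_coords_def det2_def by simp
  ultimately show "harmonic_pencil (join (abs_point a) (abs_point c)) (join (abs_point a) (abs_point d))
      (join (abs_point a) (abs_point b)) (pol (abs_point a))"
    using harmonic_pencil_base_comb_iff[OF lm] det_abd by simp
qed

lemma polar_rotations:
  "polar c b d a = pol" "polar b d a c = pol" "polar d a c b = pol"
  using polar_rotate[where a = a and c = c and b = b and d = d]
    polar_rotate[where a = c and c = b and b = d and d = a]
    polar_rotate[where a = b and c = d and b = a and d = c] by simp_all

lemma tangent_bundle_eq:
  "tangent_bundle (abs_point a) (abs_point c) (abs_point b) (abs_point d) =
    harmonic_bundle (pol (abs_point a)) (pol (abs_point c)) (pol (abs_point b)) (pol (abs_point d))"
  using tangent_at_vertex quadrangle.tangent_at_vertex[OF rotate]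
    quadrangle.tangent_at_vertex[OF quadrangle.rotate[OF rotate]]
    quadrangle.tangent_at_vertex[OF quadrangle.rotate[OF quadrangle.rotate[OF rotate]]]
  unfolding tangent_bundle_def polar_rotations by simp

end

context quadrangle
begin

lemma conic_point_on_polar_of_a:
  assumes y: "nz y" and q: "conic y = 0" and conj: "pform a y = 0"
  shows "cross y a = (0, 0, 0)"
proof (cases "det3 y a b = 0")
  case True
  have "nz (cross y b)"
  proof
    assume "cross y b = (0, 0, 0)"
    then obtain k where k: "y = sc k b" using cross_eq_zero_imp_sc vertices_nonzero by blast
    then have "k \<noteq> 0" using y by (auto simp: sc_eq_zero_iff)
    moreover have "pform a y = k * (- 2 * det3 a b c * det3 a b d)"
      unfolding k polar_form_sc_right polar_form_a_b ..
    ultimately show False using conj two_nonzero det_abc det_abd by simp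
  qed
  then show ?thesis using conic_on_line_ab[OF True q] by blast
next
  case False
  define X1 where "X1 = det3 y a c"
  define X3 where "X3 = det3 y a d"
  have "X1 * det3 a b d + X3 * det3 a b c = 0"
    using conj unfolding polar_form_at_vertex X1_def X3_def .
  then have e: "X3 * det3 a b c = - (X1 * det3 a b d)" by (metis add.commute eq_neg_iff_add_eq_0)
  have "det3 a b c * conic y = X1 * (det3 a b c * det3 y b d) + (X3 * det3 a b c) * det3 y b c"
    unfolding conic_form_def X1_def X3_def by (simp add: algebra_simps)
  also have "\<dots> = X1 * (det3 a b c * det3 y b d - det3 a b d * det3 y b c)"
    unfolding e by (simp add: algebra_simps)
  also have "\<dots> = X1 * (det3 a b y * det3 c b d)"
    unfolding det3_pluecker[of a b c y d] ..
  finally have "X1 * (det3 a b y * det3 c b d) = 0" using q by simp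
  moreover have "det3 a b y \<noteq> 0" using False det3_perm(5)[where u = a and v = b and w = y] by simp
  ultimately have "X1 = 0" using det_cbd by simp
  then have "X3 = 0" using e det_abc det_abd by simp
  then show ?thesis using on_ac_ad \<open>X1 = 0\<close> unfolding X1_def X3_def by blast
qed

lemma conic_form_rotations:
  "conic_form c b d a = conic" "conic_form b d a c = conic" "conic_form d a c b = conic"
  using conic_form_rotate[where a = a and c = c and b = b and d = d]
    conic_form_rotate[where a = c and c = b and b = d and d = a]
    conic_form_rotate[where a = b and c = d and b = a and d = c] by simp_all

lemma polar_form_rotations:
  "polar_form c b d a = pform" "polar_form b d a c = pform" "polar_form d a c b = pform"
  using polar_form_rotate[where a = a and c = c and b = b and d = d]
    polar_form_rotate[where a = c and c = b and b = d and d = a]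
    polar_form_rotate[where a = b and c = d and b = a and d = c] by simp_all

lemma conic_point_on_polar_of_vertex:
  assumes "nz y" "conic y = 0" "v \<in> {a, b, c, d}" "pform v y = 0"
  shows "cross y v = (0, 0, 0)"
  using assms conic_point_on_polar_of_a
    quadrangle.conic_point_on_polar_of_a[OF rotate]
    quadrangle.conic_point_on_polar_of_a[OF quadrangle.rotate[OF rotate]]
    quadrangle.conic_point_on_polar_of_a[OF quadrangle.rotate[OF quadrangle.rotate[OF rotate]]]
  unfolding conic_form_rotations polar_form_rotations by blast

text \<open>If two distinct points of the conic were conjugate, the whole line through them would
  lie on the conic, and it would meet the diagonal \<open>A \<or> B\<close> off the vertices.\<close>
lemma conic_conjugate_points_eq:
  assumes y: "nz y" and qy: "conic y = 0" and qz: "conic z = 0" and conj: "pform y z = 0"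
    and nv: "\<forall>v\<in>{a, b, c, d}. nz (cross y v)"
  shows "cross y z = (0, 0, 0)"
proof (rule ccontr)
  assume yz: "cross y z \<noteq> (0, 0, 0)"
  define n where "n = cross y z"
  have off_line: "dot v n \<noteq> 0" if v: "v \<in> {a, b, c, d}" for v
  proof
    assume "dot v n = 0"
    then obtain s t where st: "v = comb s y t z"
      using det3_eq_zero_imp_comb yz unfolding n_def det3_def by blast
    have "pform v y = s * (2 * conic y) + t * pform y z"
      unfolding st polar_form_comb_left polar_form_self using polar_form_commute[of a c b d z y] by simp
    then have "cross y v = (0, 0, 0)"
      using conic_point_on_polar_of_vertex[OF y qy v] qy conj by simp
    then show False using nv v by blast
  qed
  define w where "w = cross n (cross a b)"
  have nw: "nz w"
  proof
    assume "w = (0, 0, 0)"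
    then obtain k where "n = sc k (cross a b)"
      using cross_eq_zero_imp_sc cross_ab_nonzero unfolding w_def by blast
    then have "dot a n = 0" by (simp add: sc_simps)
    then show False using off_line[of a] by simp
  qed
  have "dot w n = 0" "dot w (cross a b) = 0" unfolding w_def by simp_all
  then have wyz: "det3 w y z = 0" and wab: "det3 w a b = 0" unfolding n_def det3_def by simp_all
  obtain s t where st: "w = comb s y t z" using det3_eq_zero_imp_comb[OF wyz yz] by blast
  have "conic w = 0" unfolding st conic_form_comb using qy qz conj by simp
  then have "cross w a = (0, 0, 0) \<or> cross w b = (0, 0, 0)" using conic_on_line_ab[OF wab] by simp
  moreover have "cross w v \<noteq> (0, 0, 0)" if "v \<in> {a, b, c, d}" for v
  proof
    assume "cross w v = (0, 0, 0)"
    then have "cross v w = (0, 0, 0)" using cross_antisym[of v w] by (simp add: sc_def)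
    then obtain k where "v = sc k w" using cross_eq_zero_imp_sc nw by blast
    then have "dot v n = 0" using \<open>dot w n = 0\<close> by (simp add: sc_simps)
    then show False using off_line that by blast
  qed
  ultimately show False by blast
qed

lemma meet_polars_eq:
  assumes y: "nz y" and v: "nz v" and yv: "abs_point y \<noteq> abs_point v"
    and q: "nz q" "pform q y = 0" "pform q v = 0"
  shows "meet (pol (abs_point y)) (pol (abs_point v)) = abs_point q"
proof -
  have "pol (abs_point y) \<noteq> pol (abs_point v)" using yv inj_polar by (simp add: inj_eq)
  then have "nz (cross (pvec y) (pvec v))"
    using polar_abs[OF y] polar_abs[OF v] polar_vec_nonzero[OF y] polar_vec_nonzero[OF v]
    by (simp add: abs_line_eq_iff)
  moreover have "dot q (pvec y) = 0" "dot q (pvec v) = 0"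
    using q by (simp_all add: dot_polar_vec polar_form_commute)
  ultimately show ?thesis
    using meet_abs_eq[OF q(1) polar_vec_nonzero[OF y] polar_vec_nonzero[OF v]]
      polar_abs[OF y] polar_abs[OF v] by simp
qed

lemma meet_polar_vertex:
  assumes y: "nz y" and v: "v \<in> {a, b, c, d}" "nz (cross y v)"
    and q: "pvec q = sc t (cross y v)" "t \<noteq> 0"
  shows "meet (pol (abs_point y)) (pol (abs_point v)) = abs_point q"
proof -
  have "nz v" using v vertices_nonzero by auto
  have "nz (pvec q)" using q v by (simp add: sc_eq_zero_iff)
  then have "nz q" by (metis polar_vec_zero)
  moreover have "pform q y = 0" "pform q v = 0"
    using q dot_polar_vec[of y a c b d q] dot_polar_vec[of v a c b d q] by (simp_all add: sc_simps)
  moreover have "abs_point y \<noteq> abs_point v"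
    using \<open>nz v\<close> v y by (simp add: abs_point_eq_iff)
  ultimately show ?thesis using meet_polars_eq[OF y \<open>nz v\<close>] by blast
qed

lemma harmonic_polars_iff_conic:
  assumes y: "nz y" and nv: "\<forall>v\<in>{a, b, c, d}. nz (cross y v)" and yab: "det3 y a b \<noteq> 0"
  shows "harmonic (meet (pol (abs_point y)) (pol (abs_point a))) (meet (pol (abs_point y)) (pol (abs_point b)))
      (meet (pol (abs_point y)) (pol (abs_point c))) (meet (pol (abs_point y)) (pol (abs_point d)))
    \<longleftrightarrow> conic y = 0"
proof -
  have nzc: "nz (cross y a)" "nz (cross y b)" "nz (cross y c)" "nz (cross y d)" using nv by auto
  obtain p1 where p1: "pvec p1 = cross y a" using polar_vec_surj[OF nzc(1)] by blast
  obtain p2 where p2: "pvec p2 = cross y b" using polar_vec_surj[OF nzc(2)] by blast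
  define k where "k = det3 a b y"
  have k: "k \<noteq> 0" using yab det3_perm(5)[where u = a and v = b and w = y] unfolding k_def by simp
  have p12: "nz (cross p1 p2)"
  proof
    assume "cross p1 p2 = (0, 0, 0)"
    moreover have "nz p2" using p2 nzc by auto
    ultimately obtain t where "p1 = sc t p2" using cross_eq_zero_imp_sc by blast
    then have "cross y a = sc t (cross y b)" using p1 p2 polar_vec_sc by metis
    then have "cross (cross y a) (cross y b) = (0, 0, 0)" by (simp add: cross_sc_self)
    then show False using yab y by (simp add: cross_cross_common sc_eq_zero_iff)
  qed
  have meet_v: "meet (pol (abs_point y)) (pol (abs_point v)) = abs_point q"
    if "v \<in> {a, b, c, d}" "pvec q = sc t (cross y v)" "t \<noteq> 0" for v q t
    using meet_polar_vertex[OF y that(1) _ that(2,3)] nv that(1) by blast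
  have LC: "pvec (comb (- det3 y b c) p1 (det3 y a c) p2) = sc k (cross y c)"
    and LD: "pvec (comb (- det3 y b d) p1 (det3 y a d) p2) = sc k (cross y d)"
    unfolding polar_vec_comb p1 p2 k_def by (rule cross_in_pencil)+
  have nzC: "nz (sc k (cross y c))" and nzD: "nz (sc k (cross y d))"
    using k nzc by (simp_all add: sc_eq_zero_iff)
  have nC: "(- det3 y b c, det3 y a c) \<noteq> (0, 0)"
  proof
    assume "(- det3 y b c, det3 y a c) = (0, 0)"
    then show False using LC nzC by simp
  qed
  have nD: "(- det3 y b d, det3 y a d) \<noteq> (0, 0)"
  proof
    assume "(- det3 y b d, det3 y a d) = (0, 0)"
    then show False using LD nzD by simp
  qed
  have MC: "meet (pol (abs_point y)) (pol (abs_point c)) = abs_point (comb (- det3 y b c) p1 (det3 y a c) p2)"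
    using meet_v[OF _ LC k] by simp
  have MD: "meet (pol (abs_point y)) (pol (abs_point d)) = abs_point (comb (- det3 y b d) p1 (det3 y a d) p2)"
    using meet_v[OF _ LD k] by simp
  have MA: "meet (pol (abs_point y)) (pol (abs_point a)) = abs_point p1"
    and MB: "meet (pol (abs_point y)) (pol (abs_point b)) = abs_point p2"
    using meet_v[of a p1 1] meet_v[of b p2 1] p1 p2 by (simp_all add: sc_1)
  show ?thesis
    unfolding MA MB MC MD harmonic_base_comb_iff[OF p12 nC nD]
    by (rule harmonic_coords_iff_conic[OF nv])
qed

lemma polar_in_tangent_bundle:
  assumes z: "nz z" and q: "conic z = 0"
  shows "pol (abs_point z) \<in> tangent_bundle (abs_point a) (abs_point c) (abs_point b) (abs_point d)"
proof (cases "abs_point z \<in> {abs_point a, abs_point c, abs_point b, abs_point d}")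
  case True
  then show ?thesis unfolding tangent_bundle_eq harmonic_bundle_def by auto
next
  case False
  have nv: "\<forall>v\<in>{a, b, c, d}. nz (cross z v)"
    using False abs_point_eq_iff[OF z] vertices_nonzero by auto
  then have "det3 z a b \<noteq> 0" using conic_on_line_ab[OF _ q] by auto
  then have "harmonic (meet (pol (abs_point z)) (pol (abs_point a))) (meet (pol (abs_point z)) (pol (abs_point b)))
      (meet (pol (abs_point z)) (pol (abs_point c))) (meet (pol (abs_point z)) (pol (abs_point d)))"
    using harmonic_polars_iff_conic[OF z nv] q by simp
  moreover have "pol (abs_point z) \<notin> {pol (abs_point a), pol (abs_point c), pol (abs_point b), pol (abs_point d)}"
    using False inj_polar by (auto simp: inj_eq)
  ultimately show ?thesis unfolding tangent_bundle_eq harmonic_bundle_def by blast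
qed

lemma meet_polars_on_line_ab:
  assumes y: "nz y" "det3 y a b = 0" "abs_point y \<noteq> abs_point a" "abs_point y \<noteq> abs_point b"
  shows "meet (pol (abs_point y)) (pol (abs_point a)) = meet (pol (abs_point y)) (pol (abs_point b))"
proof -
  obtain r where r: "pvec r = cross a b" using polar_vec_surj[OF cross_ab_nonzero] by blast
  have "nz r" using r cross_ab_nonzero by auto
  have "pform r v = 0" if "v \<in> {y, a, b}" for v
    using that y(2) dot_polar_vec[of v a c b d r] unfolding r by (auto simp: det3_def)
  then show ?thesis
    using meet_polars_eq[OF y(1) vertices_nonzero(1) y(3) \<open>nz r\<close>]
      meet_polars_eq[OF y(1) vertices_nonzero(2) y(4) \<open>nz r\<close>] by simp
qed

lemma tangent_bundle_line_eq_polar: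
  assumes z: "nz z" and q: "conic z = 0"
    and l: "l \<in> tangent_bundle (abs_point a) (abs_point c) (abs_point b) (abs_point d)"
    and zl: "inc (abs_point z) l"
  shows "l = pol (abs_point z)"
proof -
  obtain w where w: "nz w" "l = abs_line w" using line_coords_exist by blast
  obtain y where y: "nz y" "pol (abs_point y) = l" using polar_surj_abs[OF w(1)] w(2) by blast
  have conj: "pform y z = 0" using zl y inc_polar_iff[OF y(1) z] by simp
  show ?thesis
  proof (cases "abs_point y \<in> {abs_point a, abs_point c, abs_point b, abs_point d}")
    case True
    then obtain v where v: "v \<in> {a, b, c, d}" "abs_point y = abs_point v" by blast
    have "nz v" using v vertices_nonzero by auto
    then obtain k where "y = sc k v"
      using v abs_point_eq_iff[OF y(1)] cross_eq_zero_imp_sc by metis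
    then have "pform v z = 0" using conj y(1) by (auto simp: polar_form_sc_left sc_eq_zero_iff)
    then have "cross z v = (0, 0, 0)" using conic_point_on_polar_of_vertex[OF z q v(1)] by simp
    then have "abs_point z = abs_point y" using v abs_point_eq_iff[OF z \<open>nz v\<close>] by simp
    then show ?thesis using y by simp
  next
    case False
    then have harm: "harmonic (meet l (pol (abs_point a))) (meet l (pol (abs_point b)))
        (meet l (pol (abs_point c))) (meet l (pol (abs_point d)))"
      using l y inj_polar unfolding tangent_bundle_eq harmonic_bundle_def by (auto simp: inj_eq)
    have nv: "\<forall>v\<in>{a, b, c, d}. nz (cross y v)"
      using False abs_point_eq_iff[OF y(1)] vertices_nonzero by auto
    have "det3 y a b \<noteq> 0"
    proof
      assume "det3 y a b = 0"
      then have "meet l (pol (abs_point a)) = meet l (pol (abs_point b))"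
        using meet_polars_on_line_ab[OF y(1)] False y(2) by auto
      then show False using harm unfolding harmonic_def by simp
    qed
    then have "conic y = 0" using harmonic_polars_iff_conic[OF y(1) nv] harm y(2) by simp
    then have "cross y z = (0, 0, 0)" using conic_conjugate_points_eq[OF y(1) _ q conj nv] by simp
    then show ?thesis using abs_point_eq_iff[OF y(1) z] y by simp
  qed
qed

lemma curve_iff_self_conjugate: "P \<in> curve \<longleftrightarrow> inc P (pol P)"
proof -
  obtain p where p: "nz p" "P = abs_point p" using point_coords_exist by blast
  then show ?thesis
    using harmonic_curve_iff_conic[OF p(1)] inc_polar_iff[OF p(1) p(1)] two_nonzero
    by (simp add: polar_form_self)
qed

lemma reflection_preserves_curve:
  "P \<notin> curve \<Longrightarrow> harmonic_reflection P (pol P) ` curve = curve"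
  using point_coords_exist harmonic_curve_iff_conic harmonic_reflection_image_curve by metis

lemma polar_of_curve_point:
  assumes "Z \<in> curve"
  shows "pol Z \<in> tangent_bundle (abs_point a) (abs_point c) (abs_point b) (abs_point d)"
    and "\<forall>l \<in> tangent_bundle (abs_point a) (abs_point c) (abs_point b) (abs_point d).
           inc Z l \<longrightarrow> l = pol Z"
proof -
  obtain z where z: "nz z" "Z = abs_point z" using point_coords_exist by blast
  then have "conic z = 0" using assms harmonic_curve_iff_conic by blast
  then show "pol Z \<in> tangent_bundle (abs_point a) (abs_point c) (abs_point b) (abs_point d)"
    and "\<forall>l \<in> tangent_bundle (abs_point a) (abs_point c) (abs_point b) (abs_point d).
           inc Z l \<longrightarrow> l = pol Z"
    using polar_in_tangent_bundle tangent_bundle_line_eq_polar z by auto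
qed

end

lemma general_position_quadrangle:
  fixes A C B D :: "'a::field point"
  assumes "(2::'a) \<noteq> 0" "general_position A C B D"
  obtains a c b d where "quadrangle a c b d"
    "A = abs_point a" "C = abs_point c" "B = abs_point b" "D = abs_point d"
proof -
  obtain a where a: "nz a" "A = abs_point a" using point_coords_exist by blast
  obtain b where b: "nz b" "B = abs_point b" using point_coords_exist by blast
  obtain c where c: "nz c" "C = abs_point c" using point_coords_exist by blast
  obtain d where d: "nz d" "D = abs_point d" using point_coords_exist by blast
  have "quadrangle a c b d"
    using assms noncollinear_imp_det3_nonzero[OF a(1) c(1) b(1)]
      noncollinear_imp_det3_nonzero[OF a(1) c(1) d(1)] noncollinear_imp_det3_nonzero[OF a(1) b(1) d(1)]
      noncollinear_imp_det3_nonzero[OF c(1) b(1) d(1)] a b c d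
    unfolding general_position_def by unfold_locales auto
  then show ?thesis using that a b c d by blast
qed

theorem mainTheorem6:
  fixes A C B D :: "'a::field point"
  assumes char: "(2::'a) \<noteq> 0"
    and quad: "general_position A C B D"
  shows "\<exists>pol. polarity pol
     \<and> (\<forall>P. P \<in> harmonic_curve A C B D \<longleftrightarrow> inc P (pol P))
     \<and> (\<forall>P. P \<notin> harmonic_curve A C B D \<longrightarrow>
            harmonic_reflection P (pol P) ` harmonic_curve A C B D = harmonic_curve A C B D)
     \<and> (\<forall>Z \<in> harmonic_curve A C B D.
            pol Z \<in> tangent_bundle A C B D \<and> inc Z (pol Z) \<and>
            (\<forall>l \<in> tangent_bundle A C B D. inc Z l \<longrightarrow> l = pol Z))"
proof -
  obtain a c b d where "quadrangle a c b d"
    and coords: "A = abs_point a" "C = abs_point c" "B = abs_point b" "D = abs_point d"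
    using general_position_quadrangle[OF char quad] by blast
  then interpret quadrangle a c b d by simp
  show ?thesis
    unfolding coords
    using polarity_polar curve_iff_self_conjugate reflection_preserves_curve polar_of_curve_point
    by blast
qed

end
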